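(* A chromosome-set $\mathfrak{C}$ equals $\mathrm{CPC}(\mathfrak{G})$ for some finite non-redundant assembly graph $\mathfrak{G}$ if and only if $\mathfrak{C}$ is finitely conducting, i.e. there is $K$ such that every finite string of length at least $K$ is a conductor for $\mathfrak{C}$.
   Context: All strings are over a fixed finite alphabet $\Sigma$. A cyclic string is a bi-infinite periodic word $\mathbb{Z}\to\Sigma$, considered up to shifting indices; for a nonempty finite string $x$, $\langle x\rangle$ is the cyclic string repeating $x$ in both directions. A chromosome-set is a set of cyclic strings. A string $u$ is a proper infix of $w$ if $w=aub$ with $a,b$ nonempty. A finite string $v$ is a conductor for $\mathfrak{C}$ if for all nonempty finite strings $a,b$ such that $va$ and $vb$ both end with $v$, we have $\langle ab\rangle\in\mathfrak{C}$ if and only if $\langle a\rangle\in\mathfrak{C}$ and $\langle b\rangle\in\mathfrak{C}$. An abstract assembly graph is a finite directed multigraph in which each vertex and edge carries a label (a finite or cyclic string) such that for every edge $e$ from $u$ to $v$, $Label(u)$ is a prefix and $Label(v)$ a suffix of $Label(e)$. An edge $e$ from $u$ to $v$ is a prefix edge if $Label(e)=Label(v)$, a suffix edge if $Label(e)=Label(u)$. An assembly graph is an abstract assembly graph in which every vertex and edge lies on a directed cycle and no edge is both a prefix and a suffix edge. The label of a walk $v_0,e_1,\dots,e_n,v_n$ is $Label(e_1)$ followed, for $i\ge 2$, by $Label(e_i)$ with its first $|Label(v_{i-1})|$ characters removed; a walk with no edges has its vertex label. A circuit is a primitive closed walk up to rotation; if its walk label is $Label(v_0)x$, its label is $\langle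 x\rangle$. $\mathrm{CPC}(\mathfrak{G})$ is the set of circuit labels. $P$ is an inner subwalk of $Q$ if $Q=APB$ with walks $A,B$ each having at least one edge. The graph is non-redundant if whenever $Label(P)$ is a proper infix of $Label(Q)$ for walks $P,Q$, $P$ is an inner subwalk of $Q$. *)

theory Defs
  imports Main "HOL-Library.Sublist"
begin

text \<open>A cyclic string is a bi-infinite periodic word from int to the alphabet, taken up to shifting
indices; we represent it as its shift-orbit (a set of bi-infinite words).\<close>

definition cyc :: "'a list \<Rightarrow> (int \<Rightarrow> 'a) set" where
  "cyc x = {(\<lambda>i. x ! nat ((i + k) mod int (length x))) | k. True}"

definition is_cyclic :: "(int \<Rightarrow> 'a) set \<Rightarrow> bool" where
  "is_cyclic c \<longleftrightarrow> (\<exists>x. x \<noteq> [] \<and> c = cyc x)"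

definition chromosome_set :: "(int \<Rightarrow> 'a) set set \<Rightarrow> bool" where
  "chromosome_set C \<longleftrightarrow> (\<forall>c\<in>C. is_cyclic c)"

definition conductor :: "(int \<Rightarrow> 'a) set set \<Rightarrow> 'a list \<Rightarrow> bool" where
  "conductor C v \<longleftrightarrow>
     (\<forall>a b. a \<noteq> [] \<longrightarrow> b \<noteq> [] \<longrightarrow> suffix v (v @ a) \<longrightarrow> suffix v (v @ b) \<longrightarrow>
        (cyc (a @ b) \<in> C \<longleftrightarrow> cyc a \<in> C \<and> cyc b \<in> C))"

definition finitely_conducting :: "(int \<Rightarrow> 'a) set set \<Rightarrow> bool" where
  "finitely_conducting C \<longleftrightarrow> (\<exists>K::nat. \<forall>v. length v \<ge> K \<longrightarrow> conductor C v)"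

record ('v, 'e, 'a) agraph =
  verts :: "'v set"
  arcs :: "'e set"
  tail :: "'e \<Rightarrow> 'v"
  head :: "'e \<Rightarrow> 'v"
  vlab :: "'v \<Rightarrow> 'a list"
  elab :: "'e \<Rightarrow> 'a list"

definition finite_graph :: "('v, 'e, 'a) agraph \<Rightarrow> bool" where
  "finite_graph G \<longleftrightarrow> finite (verts G) \<and> finite (arcs G)"

definition abstract_assembly_graph :: "('v, 'e, 'a) agraph \<Rightarrow> bool" where
  "abstract_assembly_graph G \<longleftrightarrow>
     (\<forall>e\<in>arcs G. tail G e \<in> verts G \<and> head G e \<in> verts G \<and>
        prefix (vlab G (tail G e)) (elab G e) \<and> suffix (vlab G (head G e)) (elab G e))"

definition prefix_edge :: "('v, 'e, 'a) agraph \<Rightarrow> 'e \<Rightarrow> bool" where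
  "prefix_edge G e \<longleftrightarrow> elab G e = vlab G (head G e)"

definition suffix_edge :: "('v, 'e, 'a) agraph \<Rightarrow> 'e \<Rightarrow> bool" where
  "suffix_edge G e \<longleftrightarrow> elab G e = vlab G (tail G e)"

fun is_walk :: "('v, 'e, 'a) agraph \<Rightarrow> 'v \<Rightarrow> 'e list \<Rightarrow> bool" where
  "is_walk G v [] \<longleftrightarrow> v \<in> verts G"
| "is_walk G v (e # es) \<longleftrightarrow>
     v \<in> verts G \<and> e \<in> arcs G \<and> tail G e = v \<and> is_walk G (head G e) es"

definition walk_end :: "('v, 'e, 'a) agraph \<Rightarrow> 'v \<Rightarrow> 'e list \<Rightarrow> 'v" where
  "walk_end G v es = (if es = [] then v else head G (last es))"

fun walk_label :: "('v, 'e, 'a) agraph \<Rightarrow> 'v \<Rightarrow> 'e list \<Rightarrow> 'a list" where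
  "walk_label G v [] = vlab G v"
| "walk_label G v (e # es) =
     elab G e @ concat (map (\<lambda>e'. drop (length (vlab G (tail G e'))) (elab G e')) es)"

definition directed_cycle :: "('v, 'e, 'a) agraph \<Rightarrow> 'v \<Rightarrow> 'e list \<Rightarrow> bool" where
  "directed_cycle G v es \<longleftrightarrow>
     is_walk G v es \<and> es \<noteq> [] \<and> walk_end G v es = v \<and> distinct (map (tail G) es)"

definition assembly_graph :: "('v, 'e, 'a) agraph \<Rightarrow> bool" where
  "assembly_graph G \<longleftrightarrow> abstract_assembly_graph G \<and>
     (\<forall>u\<in>verts G. \<exists>v es. directed_cycle G v es \<and> u \<in> tail G ` set es) \<and>
     (\<forall>e\<in>arcs G. \<exists>v es. directed_cycle G v es \<and> e \<in> set es) \<and>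
     (\<forall>e\<in>arcs G. \<not> (prefix_edge G e \<and> suffix_edge G e))"

definition primitive_list :: "'b list \<Rightarrow> bool" where
  "primitive_list xs \<longleftrightarrow> \<not> (\<exists>ys k. k \<ge> 2 \<and> xs = concat (replicate k ys))"

text \<open>Circuits: primitive closed walks with at least one edge (rotation does not
change the cyclic label). If the walk label is Label(v0) x, the circuit label is <x>.\<close>

definition CPC :: "('v, 'e, 'a) agraph \<Rightarrow> (int \<Rightarrow> 'a) set set" where
  "CPC G = {cyc (drop (length (vlab G v)) (walk_label G v es)) | v es.
              is_walk G v es \<and> es \<noteq> [] \<and> walk_end G v es = v \<and> primitive_list es}"

definition proper_infix :: "'a list \<Rightarrow> 'a list \<Rightarrow> bool" where
  "proper_infix u w \<longleftrightarrow> (\<exists>a b. a \<noteq> [] \<and> b \<noteq> [] \<and> w = a @ u @ b)"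

definition inner_subwalk :: "('v, 'e, 'a) agraph \<Rightarrow> 'v \<Rightarrow> 'e list \<Rightarrow> 'v \<Rightarrow> 'e list \<Rightarrow> bool" where
  "inner_subwalk G pv pes qv qes \<longleftrightarrow>
     (\<exists>as bs. as \<noteq> [] \<and> bs \<noteq> [] \<and> qes = as @ pes @ bs \<and> is_walk G qv as \<and>
        walk_end G qv as = pv \<and> is_walk G pv pes \<and>
        is_walk G (walk_end G pv pes) bs)"

definition non_redundant :: "('v, 'e, 'a) agraph \<Rightarrow> bool" where
  "non_redundant G \<longleftrightarrow>
     (\<forall>pv pes qv qes. is_walk G pv pes \<longrightarrow> is_walk G qv qes \<longrightarrow>
        proper_infix (walk_label G pv pes) (walk_label G qv qes) \<longrightarrow>
        inner_subwalk G pv pes qv qes)"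

end

theory Submission
  imports Defs
begin

text \<open>
  Let \<open>L\<close> bound all labels of a finite non-redundant assembly graph. An occurrence of a word \<open>v\<close>
  with \<open>L \<le> |v|\<close> in the label of a walk is framed by a subwalk whose label contains \<open>v\<close> as a
  proper infix, and non-redundancy forces all frames of \<open>v\<close> through the same vertex \<open>y\<close> at the
  same offset. So if \<open>v a = a' v\<close>, two successive occurrences of \<open>v\<close> cut out a closed walk at
  \<open>y\<close> whose label is conjugate to \<open>a\<close>. Loops for \<open>a\<close> and \<open>b\<close> at the common vertex \<open>y\<close>
  concatenate to a loop for \<open>ab\<close>, and a closed walk for \<open>ab\<close>, unrolled until its label contains
  \<open>v a b\<close>, yields loops for \<open>a\<close> and \<open>b\<close>: every such \<open>v\<close> is a conductor.

  Conversely, if every word of length at least \<open>K\<close> is a conductor, take the de Bruijn graph of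
  order \<open>K\<close> on the factors of \<open>C\<close>. It is non-redundant since walks are determined by their
  labels; every chromosome is traced by the closed walk of its windows; and every circuit label lies
  in \<open>C\<close>, because the conductor property lets one splice, arc by arc, the chromosome witnessing
  the next arc into the one witnessing the walk so far.
\<close>

section \<open>Cyclic words\<close>

definition bi_power :: "'a list \<Rightarrow> int \<Rightarrow> 'a" where
  "bi_power x = (\<lambda>i. x ! nat (i mod int (length x)))"

definition shift :: "int \<Rightarrow> (int \<Rightarrow> 'a) \<Rightarrow> int \<Rightarrow> 'a" where
  "shift k f = (\<lambda>i. f (i + k))"

definition shifts :: "(int \<Rightarrow> 'a) \<Rightarrow> (int \<Rightarrow> 'a) set" where
  "shifts f = range (\<lambda>k. shift k f)"

definition window :: "(int \<Rightarrow> 'a) \<Rightarrow> int \<Rightarrow> nat \<Rightarrow> 'a list" where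
  "window f i n = map (\<lambda>j. f (i + int j)) [0..<n]"

definition periodic :: "(int \<Rightarrow> 'a) \<Rightarrow> nat \<Rightarrow> bool" where
  "periodic f p \<longleftrightarrow> (\<forall>i. f (i + int p) = f i)"

lemma cyc_eq_shifts: "cyc x = shifts (bi_power x)"
  unfolding cyc_def shifts_def shift_def bi_power_def by auto

lemma shift_shift [simp]: "shift k (shift j f) = shift (j + k) f"
  unfolding shift_def by (simp add: ac_simps)

lemma shift_0 [simp]: "shift 0 f = f"
  unfolding shift_def by simp

lemma self_in_shifts: "f \<in> shifts f"
  unfolding shifts_def by (metis rangeI shift_0)

lemma shift_in_shifts: "shift k f \<in> shifts f"
  unfolding shifts_def by blast

lemma shifts_eq:
  assumes "g \<in> shifts f"
  shows "shifts g = shifts f"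
proof -
  obtain j where g: "g = shift j f" using assms unfolding shifts_def by auto
  show ?thesis
  proof
    show "shifts g \<subseteq> shifts f" using g unfolding shifts_def by auto
    have "shift k f = shift (k - j) g" for k using g by simp
    then show "shifts f \<subseteq> shifts g" unfolding shifts_def by auto
  qed
qed

lemma cyc_eq_shifts_mem: "f \<in> cyc x \<Longrightarrow> cyc x = shifts f"
  by (metis cyc_eq_shifts shifts_eq)

lemma periodic_shift: "periodic f p \<Longrightarrow> periodic (shift k f) p"
  unfolding periodic_def shift_def by (metis add.assoc add.commute)

lemma periodic_add_mult:
  assumes "periodic f p"
  shows "f (i + int p * m) = f i"
proof -
  have up: "f (i + int p * int n) = f i" for i n
  proof (induction n arbitrary: i)
    case (Suc n)
    have "f (i + int p * int (Suc n)) = f ((i + int p * int n) + int p)"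
      by (simp add: algebra_simps)
    then show ?case using Suc assms unfolding periodic_def by simp
  qed simp
  show ?thesis
  proof (cases "m \<ge> 0")
    case True
    then show ?thesis using up[of i "nat m"] by simp
  next
    case False
    then show ?thesis using up[of "i + int p * m" "nat (- m)"] by (simp add: algebra_simps)
  qed
qed

lemma periodic_mod:
  assumes "periodic f p" "p > 0"
  shows "f (i mod int p) = f i"
proof -
  have "i mod int p = i + int p * (- (i div int p))"
    by (simp add: algebra_simps minus_div_mult_eq_mod [symmetric])
  then show ?thesis using periodic_add_mult[OF assms(1), of i "- (i div int p)"] by simp
qed

lemma periodic_bi_power: "x \<noteq> [] \<Longrightarrow> periodic (bi_power x) (length x)"
  unfolding periodic_def bi_power_def by simp

lemma periodic_bi_power_mult: "x \<noteq> [] \<Longrightarrow> m > 0 \<Longrightarrow> periodic (bi_power x) (m * length x)"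
  unfolding periodic_def using periodic_add_mult[OF periodic_bi_power, of x _ "int m"]
  by (simp add: mult.commute)

lemma length_window [simp]: "length (window f i n) = n"
  unfolding window_def by simp

lemma nth_window [simp]: "j < n \<Longrightarrow> window f i n ! j = f (i + int j)"
  unfolding window_def by simp

lemma window_eq_Nil_iff [simp]: "window f i n = [] \<longleftrightarrow> n = 0"
  by (metis length_0_conv length_window)

lemma window_add: "window f i (n + m) = window f i n @ window f (i + int n) m"
  by (rule nth_equalityI) (auto simp: nth_append add.assoc)

lemma take_window: "k \<le> n \<Longrightarrow> take k (window f i n) = window f i k"
  by (rule nth_equalityI) auto

lemma drop_window: "k \<le> n \<Longrightarrow> drop k (window f i n) = window f (i + int k) (n - k)"
  by (rule nth_equalityI) (auto simp: add.assoc)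

lemma window_shift: "window (shift k f) i n = window f (i + k) n"
  unfolding window_def shift_def by (simp add: algebra_simps)

lemma window_periodic_shift:
  assumes "periodic f p"
  shows "window f (i + int p * m) n = window f i n"
  unfolding window_def using periodic_add_mult[OF assms]
  by (simp add: algebra_simps) (metis add.assoc add.commute)

lemma bi_power_window:
  assumes "periodic f p" "p > 0"
  shows "bi_power (window f j p) = shift j f"
proof
  fix i
  have "bi_power (window f j p) i = shift j f (i mod int p)"
    unfolding bi_power_def shift_def using assms(2) by (simp add: nat_less_iff add.commute)
  also have "\<dots> = shift j f i"
    using periodic_mod[OF periodic_shift[OF assms(1)] assms(2)] .
  finally show "bi_power (window f j p) i = shift j f i" .
qed

lemma cyc_window:
  assumes "periodic f p" "p > 0"
  shows "cyc (window f j p) = shifts f"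
  using cyc_eq_shifts bi_power_window[OF assms] shifts_eq shift_in_shifts by metis

lemma window_bi_power_replicate:
  assumes "x \<noteq> []"
  shows "window (bi_power x) 0 (m * length x) = concat (replicate m x)"
proof (induction m)
  case (Suc m)
  have self: "window (bi_power x) 0 (length x) = x"
    by (rule nth_equalityI) (auto simp: bi_power_def)
  have "window (bi_power x) 0 (Suc m * length x)
      = window (bi_power x) 0 (length x) @ window (bi_power x) (int (length x)) (m * length x)"
    using window_add[of _ 0 "length x"] by simp
  also have "\<dots> = x @ window (bi_power x) (int (length x)) (m * length x)" using self by simp
  also have "window (bi_power x) (int (length x)) (m * length x) = window (bi_power x) 0 (m * length x)"
    using window_periodic_shift[OF periodic_bi_power[OF assms], of 0 1] by simp
  finally show ?case using Suc by simp
qed simp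

lemma cyc_replicate:
  assumes "x \<noteq> []" "m > 0"
  shows "cyc (concat (replicate m x)) = cyc x"
  using cyc_window[OF periodic_bi_power_mult[OF assms], of 0] window_bi_power_replicate[OF assms(1)]
    assms by (simp add: cyc_eq_shifts)

lemma cyc_rotate:
  assumes "x \<noteq> []"
  shows "cyc (rotate r x) = cyc x"
proof -
  have "rotate r x = window (bi_power x) (int r) (length x)"
    by (rule nth_equalityI)
      (simp_all add: nth_rotate bi_power_def nat_mod_as_int add.commute)
  then show ?thesis
    using cyc_window[OF periodic_bi_power[OF assms], of "int r"] cyc_eq_shifts[of x] assms by simp
qed

lemma cyc_append_commute: "x @ y \<noteq> [] \<Longrightarrow> cyc (x @ y) = cyc (y @ x)"
  using cyc_rotate[of "x @ y" "length x"] by (simp add: rotate_append)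

lemma conjugate_eq_rotate:
  "u @ a = a' @ u \<Longrightarrow> \<exists>r. a' = rotate r a"
proof (induction "length u" arbitrary: u rule: less_induct)
  case less
  have la: "length a' = length a" using arg_cong[OF less.prems, of length] by simp
  show ?case
  proof (cases "length a \<le> length u \<and> a \<noteq> []")
    case True
    have "a' = take (length a) u" using arg_cong[OF less.prems, of "take (length a)"] True la by simp
    then have "u = a' @ drop (length a) u" by simp
    then have "drop (length a) u @ a = a' @ drop (length a) u" using less.prems by (metis same_append_eq append.assoc)
    then show ?thesis using less.hyps True by (metis length_drop diff_less length_greater_0_conv le_zero_eq not_gr_zero)
  next
    case False
    show ?thesis
    proof (cases "a = []")
      case True
      then show ?thesis using la by simp
    next
      case False
      define q where "q = take (length a - length u) a"
      have a': "a' = u @ q"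
        using arg_cong[OF less.prems, of "take (length a)"] \<open>\<not> (length a \<le> length u \<and> a \<noteq> [])\<close> False la
        unfolding q_def by simp
      then have "a = q @ u" using less.prems by simp
      then show ?thesis using a' by (metis rotate_append)
    qed
  qed
qed

lemma cyc_conjugate: "u @ a = a' @ u \<Longrightarrow> a \<noteq> [] \<Longrightarrow> cyc a' = cyc a"
  using conjugate_eq_rotate cyc_rotate by metis

lemma conjugate_replicate:
  assumes "v @ w = w' @ v"
  shows "v @ concat (replicate N w) = concat (replicate N w') @ v"
proof (induction N)
  case (Suc N)
  have "v @ concat (replicate (Suc N) w) = (v @ concat (replicate N w)) @ w"
    by (simp add: replicate_append_same[symmetric] del: replicate_append_same)
  also have "\<dots> = concat (replicate N w') @ v @ w" using Suc by simp
  also have "\<dots> = concat (replicate (Suc N) w') @ v" using assms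
    by (simp add: replicate_append_same[symmetric] del: replicate_append_same)
  finally show ?case .
qed simp

lemma conjugate_window:
  assumes "v @ w = w' @ v" "w \<noteq> []"
  shows "\<exists>p. window (bi_power w) p (length v + length w) = v @ w"
proof -
  define N where "N = length v"
  have "length v \<le> length (concat (replicate N w))"
    unfolding N_def using assms(2) by (simp add: length_concat sum_list_replicate Suc_le_eq)
  moreover have "suffix v (concat (replicate N w') @ v)" by (auto simp: suffix_def)
  moreover have "suffix (concat (replicate N w)) (concat (replicate N w') @ v)"
    using conjugate_replicate[OF assms(1)] by (metis suffixI)
  ultimately have "suffix v (concat (replicate N w))"
    by (metis suffix_appendI suffix_length_suffix suffix_order.refl)
  then obtain X where X: "concat (replicate N w) = X @ v" by (auto simp: suffix_def)
  have full: "window (bi_power w) 0 (Suc N * length w) = X @ v @ w"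
    using window_bi_power_replicate[OF assms(2), of "Suc N"] X
    by (simp add: replicate_append_same[symmetric] del: replicate_append_same)
  then have "window (bi_power w) (int (length X)) (length v + length w) = drop (length X) (X @ v @ w)"
    using drop_window[of "length X" "Suc N * length w" "bi_power w" 0]
    by (metis add_0 add_diff_cancel_left' le_add1 length_append length_window)
  then show ?thesis by auto
qed

lemma window_in_power:
  assumes "z \<noteq> []"
  shows "\<exists>m \<gamma> \<eta>. \<gamma> \<noteq> [] \<and> \<eta> \<noteq> [] \<and> concat (replicate m z) = \<gamma> @ window (bi_power z) q n @ \<eta>"
proof -
  define p where "p = length z"
  have p: "1 \<le> p" using assms unfolding p_def by (simp add: Suc_le_eq)
  define j where "j = nat (\<bar>q\<bar> + 1)"
  have "1 * j \<le> p * j" using p by (rule mult_le_mono1)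
  then have "int j \<le> int p * int j" by (metis mult_1 of_nat_le_iff of_nat_mult)
  then have pos: "1 \<le> q + int p * int j" unfolding j_def by linarith
  define q' where "q' = nat (q + int p * int j)"
  have S: "window (bi_power z) (int q') n = window (bi_power z) q n"
    using window_periodic_shift[OF periodic_bi_power[OF assms], of q "int j" n] pos
    unfolding q'_def p_def by simp
  define m where "m = q' + n + 1"
  have "m * 1 \<le> m * p" using p by (rule mult_le_mono2)
  then have "q' + n + 1 \<le> m * p" unfolding m_def by simp
  define r where "r = m * p - q' - n"
  have r: "m * p = q' + n + r" "1 \<le> r" using \<open>q' + n + 1 \<le> m * p\<close> unfolding r_def by linarith+
  have "concat (replicate m z) = window (bi_power z) 0 (q' + n + r)"
    using window_bi_power_replicate[OF assms, of m] r(1) unfolding p_def by simp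
  also have "\<dots> = window (bi_power z) 0 q' @ window (bi_power z) q n @
      window (bi_power z) (int q' + int n) r"
    using S by (simp add: window_add)
  finally have "concat (replicate m z) = window (bi_power z) 0 q' @ window (bi_power z) q n @
      window (bi_power z) (int q' + int n) r" .
  moreover have "window (bi_power z) 0 q' \<noteq> []" "window (bi_power z) (int q' + int n) r \<noteq> []"
    using pos r(2) unfolding q'_def by simp_all
  ultimately show ?thesis by blast
qed

section \<open>Walks and circuits\<close>

text \<open>Each arc label splits as \<open>vlab (tail e) @ arc_ext e = arc_lead e @ vlab (head e)\<close>.\<close>

definition arc_ext :: "('v, 'e, 'a) agraph \<Rightarrow> 'e \<Rightarrow> 'a list" where
  "arc_ext G e = drop (length (vlab G (tail G e))) (elab G e)"

definition arc_lead :: "('v, 'e, 'a) agraph \<Rightarrow> 'e \<Rightarrow> 'a list" where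
  "arc_lead G e = take (length (elab G e) - length (vlab G (head G e))) (elab G e)"

definition walk_ext :: "('v, 'e, 'a) agraph \<Rightarrow> 'e list \<Rightarrow> 'a list" where
  "walk_ext G es = concat (map (arc_ext G) es)"

lemma walk_ext_Nil [simp]: "walk_ext G [] = []"
  by (simp add: walk_ext_def)

lemma walk_ext_Cons [simp]: "walk_ext G (e # es) = arc_ext G e @ walk_ext G es"
  by (simp add: walk_ext_def)

lemma walk_ext_append [simp]: "walk_ext G (xs @ ys) = walk_ext G xs @ walk_ext G ys"
  by (simp add: walk_ext_def)

lemma walk_ext_replicate: "walk_ext G (concat (replicate m es)) = concat (replicate m (walk_ext G es))"
  by (induction m) auto

lemma walk_end_Nil [simp]: "walk_end G v [] = v"
  by (simp add: walk_end_def)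

lemma walk_end_Cons [simp]: "walk_end G v (e # es) = walk_end G (head G e) es"
  by (simp add: walk_end_def)

lemma walk_end_append: "walk_end G v (xs @ ys) = walk_end G (walk_end G v xs) ys"
  by (induction xs arbitrary: v) auto

lemma walk_end_start_indep: "es \<noteq> [] \<Longrightarrow> walk_end G v es = walk_end G w es"
  by (simp add: walk_end_def)

lemma is_walk_start_in_verts: "is_walk G v es \<Longrightarrow> v \<in> verts G"
  by (cases es) auto

lemma is_walk_append:
  "is_walk G v (xs @ ys) \<longleftrightarrow> is_walk G v xs \<and> is_walk G (walk_end G v xs) ys"
  by (induction xs arbitrary: v) (auto dest: is_walk_start_in_verts)

lemma is_walk_take: "is_walk G v es \<Longrightarrow> is_walk G v (take k es)"
  using is_walk_append[of G v "take k es" "drop k es"] by simp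

lemma walk_end_in_verts: "is_walk G v es \<Longrightarrow> walk_end G v es \<in> verts G"
  by (induction es arbitrary: v) auto

lemma is_walk_arcs: "is_walk G v es \<Longrightarrow> set es \<subseteq> arcs G"
  by (induction es arbitrary: v) auto

lemma tail_hd_walk: "is_walk G v es \<Longrightarrow> es \<noteq> [] \<Longrightarrow> tail G (hd es) = v"
  by (cases es) auto

lemma closed_walk_replicate:
  assumes "is_walk G v es" "walk_end G v es = v"
  shows "is_walk G v (concat (replicate m es)) \<and> walk_end G v (concat (replicate m es)) = v"
  by (induction m) (use assms is_walk_start_in_verts in \<open>auto simp: is_walk_append walk_end_append\<close>)

context
  fixes G :: "('v, 'e, 'a) agraph"
  assumes G: "abstract_assembly_graph G"
begin

lemma elab_eq_tail_ext: "e \<in> arcs G \<Longrightarrow> elab G e = vlab G (tail G e) @ arc_ext G e"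
  using G unfolding abstract_assembly_graph_def arc_ext_def prefix_def by auto

lemma elab_eq_lead_head: "e \<in> arcs G \<Longrightarrow> elab G e = arc_lead G e @ vlab G (head G e)"
  using G unfolding abstract_assembly_graph_def arc_lead_def suffix_def by auto

lemma tail_ext_eq_lead_head:
  "e \<in> arcs G \<Longrightarrow> vlab G (tail G e) @ arc_ext G e = arc_lead G e @ vlab G (head G e)"
  using elab_eq_tail_ext elab_eq_lead_head by metis

lemma walk_label_eq:
  assumes "is_walk G v es"
  shows "walk_label G v es = vlab G v @ walk_ext G es"
proof (cases es)
  case (Cons e es')
  then have "walk_label G v es = elab G e @ walk_ext G es'"
    by (simp add: walk_ext_def arc_ext_def[abs_def])
  then show ?thesis using Cons assms elab_eq_tail_ext by auto
qed simp

lemma suffix_walk_end_label: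
  "is_walk G v es \<Longrightarrow> suffix (vlab G (walk_end G v es)) (vlab G v @ walk_ext G es)"
proof (induction es rule: rev_induct)
  case (snoc e es)
  then have "is_walk G v es" and e: "e \<in> arcs G" "tail G e = walk_end G v es"
    by (auto simp: is_walk_append)
  then obtain X where "vlab G v @ walk_ext G es = X @ vlab G (tail G e)"
    using snoc.IH by (auto simp: suffix_def)
  then have "vlab G v @ walk_ext G (es @ [e]) = X @ vlab G (tail G e) @ arc_ext G e"
    by simp
  also have "\<dots> = X @ arc_lead G e @ vlab G (head G e)"
    using tail_ext_eq_lead_head[OF e(1)] by simp
  finally show ?case by (simp add: walk_end_def suffix_def)
qed simp

lemma walk_label_eq_leads:
  "is_walk G x es \<Longrightarrow>
    vlab G x @ walk_ext G es = concat (map (arc_lead G) es) @ vlab G (walk_end G x es)"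
proof (induction es arbitrary: x)
  case (Cons e es)
  then have e: "e \<in> arcs G" "tail G e = x" and w: "is_walk G (head G e) es" by auto
  have "vlab G x @ walk_ext G (e # es) = (vlab G x @ arc_ext G e) @ walk_ext G es" by simp
  also have "\<dots> = arc_lead G e @ vlab G (head G e) @ walk_ext G es"
    using tail_ext_eq_lead_head[OF e(1)] e(2) by simp
  also have "\<dots> = arc_lead G e @ concat (map (arc_lead G) es) @ vlab G (walk_end G (head G e) es)"
    using Cons.IH[OF w] by simp
  finally show ?case by simp
qed simp

end

lemma concat_replicate_mult:
  "concat (replicate k (concat (replicate j xs))) = concat (replicate (k * j) xs)"
  by (induction k) (auto simp: replicate_add)

lemma primitive_root_exists:
  "xs \<noteq> [] \<Longrightarrow> \<exists>ys k. k > 0 \<and> xs = concat (replicate k ys) \<and> primitive_list ys \<and> ys \<noteq> []"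
proof (induction "length xs" arbitrary: xs rule: less_induct)
  case less
  show ?case
  proof (cases "primitive_list xs")
    case True
    then show ?thesis using less.prems by (intro exI[of _ xs] exI[of _ 1]) auto
  next
    case False
    then obtain ys k where k: "k \<ge> 2" "xs = concat (replicate k ys)"
      unfolding primitive_list_def by auto
    have ys: "ys \<noteq> []" using k less.prems by auto
    have "length xs = k * length ys" using k by (simp add: length_concat sum_list_replicate)
    then have "length ys < length xs" using k(1) ys by (simp add: nat_mult_less_cancel1)
    then obtain zs j where "j > 0" "ys = concat (replicate j zs)" "primitive_list zs" "zs \<noteq> []"
      using less.hyps ys by blast
    then show ?thesis using k concat_replicate_mult[of k j zs]
      by (intro exI[of _ zs] exI[of _ "k * j"]) auto
  qed
qed

text \<open>A closed walk that is not primitive is a power of a primitive one with the same cyclic label,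
  so \<open>CPC\<close> is the set of labels of all closed walks.\<close>

lemma CPC_iff_closed_walk:
  assumes G: "abstract_assembly_graph G"
  shows "c \<in> CPC G \<longleftrightarrow>
    (\<exists>v es. is_walk G v es \<and> es \<noteq> [] \<and> walk_end G v es = v \<and> c = cyc (walk_ext G es))"
    (is "_ \<longleftrightarrow> ?closed")
proof
  assume "c \<in> CPC G"
  then show ?closed unfolding CPC_def using walk_label_eq[OF G] by fastforce
next
  assume ?closed
  then obtain v es where es: "is_walk G v es" "es \<noteq> []" "walk_end G v es = v"
    and c: "c = cyc (walk_ext G es)" by blast
  obtain ys k where k: "k > 0" "es = concat (replicate k ys)" "primitive_list ys" "ys \<noteq> []"
    using primitive_root_exists[OF es(2)] by blast
  have split: "es = ys @ concat (replicate (k - 1) ys)" "es = concat (replicate (k - 1) ys) @ ys"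
    using k(1,2) by (metis Suc_diff_1 concat.simps(2) replicate_Suc replicate_append_same concat_append
        concat.simps append_Nil2)+
  have ys: "is_walk G v ys" "walk_end G v ys = v"
    using es split is_walk_append walk_end_append walk_end_start_indep k(4) by metis+
  have "cyc (walk_ext G ys) = cyc (drop (length (vlab G v)) (walk_label G v ys))"
    using walk_label_eq[OF G ys(1)] by simp
  then have "cyc (walk_ext G ys) \<in> CPC G"
    unfolding CPC_def using ys k(3,4) by blast
  moreover have "cyc (walk_ext G es) = cyc (walk_ext G ys)"
    using k(1,2) walk_ext_replicate cyc_replicate by (metis concat_replicate_trivial)
  ultimately show "c \<in> CPC G" using c by simp
qed

lemma assembly_graph_abstract: "assembly_graph G \<Longrightarrow> abstract_assembly_graph G"
  unfolding assembly_graph_def by blast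

lemma closed_walk_ext_nonempty:
  assumes G: "assembly_graph G" and w: "is_walk G v es" "es \<noteq> []" "walk_end G v es = v"
  shows "walk_ext G es \<noteq> []"
proof
  assume ext: "walk_ext G es = []"
  note AG = assembly_graph_abstract[OF G]
  obtain e es' where es: "es = e # es'" using w(2) by (cases es) auto
  have "concat (map (arc_lead G) es) = []"
    using walk_label_eq_leads[OF AG w(1)] ext w(3) by simp
  then have "arc_lead G e = []" "arc_ext G e = []" using ext es by auto
  moreover have "e \<in> arcs G" using w(1) es by simp
  ultimately have "prefix_edge G e \<and> suffix_edge G e"
    unfolding prefix_edge_def suffix_edge_def
    by (metis elab_eq_lead_head[OF AG] elab_eq_tail_ext[OF AG] append_Nil append_Nil2)
  then show False using G \<open>e \<in> arcs G\<close> unfolding assembly_graph_def by blast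
qed

lemma closed_walk_split_at_repeated_tail:
  assumes w: "is_walk G v es" "walk_end G v es = v" and "\<not> distinct (map (tail G) es)"
  obtains u es1 es2 es3 where "es = es1 @ es2 @ es3" "es2 \<noteq> []" "es3 \<noteq> []"
    "is_walk G u es2" "walk_end G u es2 = u" "is_walk G v (es1 @ es3)" "walk_end G v (es1 @ es3) = v"
proof -
  obtain xs u ys zs where d: "map (tail G) es = xs @ [u] @ ys @ [u] @ zs"
    using not_distinct_decomp assms(3) by blast
  define es1 where "es1 = take (length xs) es"
  define rest where "rest = drop (length xs) es"
  define es2 where "es2 = take (Suc (length ys)) rest"
  define es3 where "es3 = drop (Suc (length ys)) rest"
  have les: "length es = length xs + Suc (length ys) + Suc (length zs)"
    using arg_cong[OF d, of length] by simp
  have "rest = es2 @ es3" unfolding es2_def es3_def by simp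
  then have es: "es = es1 @ es2 @ es3" unfolding es1_def rest_def by (metis append_take_drop_id)
  have ne: "es2 \<noteq> []" "es3 \<noteq> []" unfolding es2_def es3_def rest_def using les by auto
  have hd: "tail G (hd es2) = u" "tail G (hd es3) = u"
    using arg_cong[OF d, of "\<lambda>ts. ts ! length xs"]
      arg_cong[OF d, of "\<lambda>ts. ts ! (length xs + Suc (length ys))"] les ne
    unfolding es2_def es3_def rest_def by (simp_all add: hd_drop_conv_nth hd_take nth_append add.commute)
  have w': "is_walk G v es1" "is_walk G (walk_end G v es1) es2"
    "is_walk G (walk_end G (walk_end G v es1) es2) es3"
    using w(1) unfolding es by (simp_all add: is_walk_append)
  have e1: "walk_end G v es1 = u" using trans[OF sym[OF tail_hd_walk[OF w'(2) ne(1)]] hd(1)] .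
  have e2: "walk_end G u es2 = u" using trans[OF sym[OF tail_hd_walk[OF w'(3) ne(2)]] hd(2)] e1 by simp
  have "is_walk G v (es1 @ es3)" using w'(1,3) e1 e2 by (simp add: is_walk_append)
  moreover have "walk_end G v (es1 @ es3) = v"
    using w(2) e1 e2 unfolding es by (simp add: walk_end_append)
  ultimately show ?thesis by (rule that[OF es ne w'(2)[unfolded e1] e2])
qed

lemma closed_walk_contains_cycle:
  assumes "is_walk G v es" "es \<noteq> []" "walk_end G v es = v" "e \<in> set es"
  shows "\<exists>v' es'. directed_cycle G v' es' \<and> e \<in> set es'"
  using assms
proof (induction "length es" arbitrary: v es rule: less_induct)
  case less
  show ?case
  proof (cases "distinct (map (tail G) es)")
    case True
    then show ?thesis using less.prems unfolding directed_cycle_def by blast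
  next
    case False
    obtain u es1 es2 es3 where split: "es = es1 @ es2 @ es3" "es2 \<noteq> []" "es3 \<noteq> []"
      "is_walk G u es2" "walk_end G u es2 = u" "is_walk G v (es1 @ es3)" "walk_end G v (es1 @ es3) = v"
      by (rule closed_walk_split_at_repeated_tail[OF less.prems(1,3) False])
    have short: "length es2 < length es" "length (es1 @ es3) < length es"
      using split(1-3) by simp_all
    show ?thesis
    proof (cases "e \<in> set es2")
      case True
      then show ?thesis using less.hyps[OF short(1) split(4,2,5)] by blast
    next
      case False
      then have "e \<in> set (es1 @ es3)" using less.prems(4) split(1) by auto
      moreover have "es1 @ es3 \<noteq> []" using split(3) by simp
      ultimately show ?thesis using less.hyps[OF short(2) split(6) _ split(7)] by blast
    qed
  qed
qed

section \<open>Frames in non-redundant graphs\<close>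

lemma concat_map_cut_before_end:
  assumes "concat (map g xs) = w @ z" "z \<noteq> []"
  shows "\<exists>ps x rs \<beta> T. xs = ps @ x # rs \<and> g x = \<beta> @ T \<and> T \<noteq> [] \<and> w = concat (map g ps) @ \<beta>"
  using assms(1)
proof (induction xs arbitrary: w)
  case Nil
  then show ?case using assms(2) by simp
next
  case (Cons x xs)
  show ?case
  proof (cases "length w < length (g x)")
    case True
    then have "take (length w) (g x) = w"
      using Cons.prems by (simp add: append_eq_append_conv_if)
    then have "g x = w @ drop (length w) (g x)" by (metis append_take_drop_id)
    moreover have "drop (length w) (g x) \<noteq> []" using True by simp
    ultimately have "x # xs = [] @ x # xs \<and> g x = w @ drop (length w) (g x) \<and>
        drop (length w) (g x) \<noteq> [] \<and> w = concat (map g []) @ w" by simp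
    then show ?thesis by blast
  next
    case False
    then have "take (length (g x)) w = g x" and "concat (map g xs) = drop (length (g x)) w @ z"
      using Cons.prems by (auto simp: append_eq_append_conv_if)
    moreover from this(1) have w: "w = g x @ drop (length (g x)) w" by (metis append_take_drop_id)
    ultimately obtain ps y rs \<beta> T where "xs = ps @ y # rs" "g y = \<beta> @ T" "T \<noteq> []"
      "drop (length (g x)) w = concat (map g ps) @ \<beta>"
      using Cons.IH by blast
    then have "x # xs = (x # ps) @ y # rs \<and> g y = \<beta> @ T \<and> T \<noteq> [] \<and> w = concat (map g (x # ps)) @ \<beta>"
      using w by simp
    then show ?thesis by blast
  qed
qed

lemma concat_map_cut_after_start:
  assumes "concat (map g xs) = w @ z" "w \<noteq> []"
  shows "\<exists>ps x rs R \<alpha>. xs = ps @ x # rs \<and> g x = R @ \<alpha> \<and> R \<noteq> [] \<and> w = concat (map g ps) @ R"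
  using assms
proof (induction xs arbitrary: w)
  case (Cons x xs)
  show ?case
  proof (cases "length w \<le> length (g x)")
    case True
    then have "take (length w) (g x) = w"
      using arg_cong[OF Cons.prems(1), of "take (length w)"] by simp
    then have "g x = w @ drop (length w) (g x)" by (metis append_take_drop_id)
    then have "x # xs = [] @ x # xs \<and> g x = w @ drop (length w) (g x) \<and> w \<noteq> [] \<and>
        w = concat (map g []) @ w" using Cons.prems(2) by simp
    then show ?thesis by blast
  next
    case False
    then have "take (length (g x)) w = g x" "drop (length (g x)) w \<noteq> []"
      and "concat (map g xs) = drop (length (g x)) w @ z"
      using Cons.prems(1) by (auto simp: append_eq_append_conv_if)
    moreover from this(1) have w: "w = g x @ drop (length (g x)) w" by (metis append_take_drop_id)
    ultimately obtain ps y rs R \<alpha> where "xs = ps @ y # rs" "g y = R @ \<alpha>" "R \<noteq> []"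
      "drop (length (g x)) w = concat (map g ps) @ R"
      using Cons.IH by blast
    then have "x # xs = (x # ps) @ y # rs \<and> g y = R @ \<alpha> \<and> R \<noteq> [] \<and> w = concat (map g (x # ps)) @ R"
      using w by simp
    then show ?thesis by blast
  qed
qed simp

lemma append_eq_append_shorter:
  assumes "xs @ ys = zs @ ts" "length xs \<le> length zs"
  shows "\<exists>us. zs = xs @ us \<and> ys = us @ ts"
  using assms append_take_drop_id[of "length xs" zs] by (auto simp: append_eq_append_conv_if)

lemma inner_subwalk_length:
  assumes "inner_subwalk G p ps q qs"
  shows "length ps + 2 \<le> length qs"
proof -
  obtain as bs where "as \<noteq> []" "bs \<noteq> []" "qs = as @ ps @ bs"
    using assms unfolding inner_subwalk_def by blast
  then show ?thesis by (cases as; cases bs) auto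
qed

lemma non_redundant_not_proper_infix:
  assumes "non_redundant G" "is_walk G p ps" "is_walk G q qs" "length qs < length ps + 2"
  shows "\<not> proper_infix (walk_label G p ps) (walk_label G q qs)"
  using assms inner_subwalk_length unfolding non_redundant_def by fastforce

text \<open>In a frame, \<open>u\<close> is a proper infix of the label of the walk \<open>e ps f\<close> (the nonempty
  \<open>R\<close> and \<open>T\<close> stick out on either side) and covers the label of \<open>ps\<close> at offset \<open>\<alpha>\<close>.\<close>

definition frame ::
  "('v, 'e, 'a) agraph \<Rightarrow> 'a list \<Rightarrow> 'v \<Rightarrow> 'e list \<Rightarrow> 'e \<Rightarrow> 'e \<Rightarrow> 'a list \<Rightarrow> 'a list \<Rightarrow> bool" where
  "frame G u y ps e f \<alpha> \<beta> \<longleftrightarrow>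
     is_walk G (tail G e) (e # ps @ [f]) \<and> head G e = y \<and>
     u = \<alpha> @ vlab G y @ walk_ext G ps @ \<beta> \<and>
     (\<exists>R. R \<noteq> [] \<and> arc_lead G e = R @ \<alpha>) \<and> (\<exists>T. T \<noteq> [] \<and> arc_ext G f = \<beta> @ T)"

lemma frame_walks:
  assumes "frame G u y ps e f \<alpha> \<beta>"
  shows "e \<in> arcs G" "is_walk G y ps" "is_walk G y (ps @ [f])" "is_walk G (tail G e) (e # ps)"
  using assms unfolding frame_def
  by (auto simp: is_walk_append[of G _ "e # ps" "[f]", simplified] is_walk_append)

context
  fixes G :: "('v, 'e, 'a) agraph"
  assumes G: "abstract_assembly_graph G" and NR: "non_redundant G"
begin

lemma frame_offset_unique:
  assumes F: "frame G u y ps e f \<alpha> \<beta>" and u: "u = \<alpha>' @ vlab G y @ walk_ext G ps @ \<beta>'"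
  shows "\<alpha>' = \<alpha>"
proof (rule ccontr)
  assume ne: "\<alpha>' \<noteq> \<alpha>"
  define P where "P = vlab G y @ walk_ext G ps"
  have eq: "\<alpha> @ P @ \<beta> = \<alpha>' @ P @ \<beta>'" using F u unfolding frame_def P_def by auto
  obtain R where R: "R \<noteq> []" "arc_lead G e = R @ \<alpha>" using F unfolding frame_def by blast
  obtain T where T: "T \<noteq> []" "arc_ext G f = \<beta> @ T" using F unfolding frame_def by blast
  note walks = frame_walks[OF F]
  have y: "head G e = y" using F unfolding frame_def by blast
  have lab_p: "walk_label G y ps = P" using walk_label_eq[OF G walks(2)] unfolding P_def .
  have lab_pf: "walk_label G y (ps @ [f]) = P @ \<beta> @ T"
    using walk_label_eq[OF G walks(3)] T unfolding P_def by simp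
  have "walk_label G (tail G e) (e # ps) = (vlab G (tail G e) @ arc_ext G e) @ walk_ext G ps"
    using walk_label_eq[OF G walks(4)] by simp
  also have "\<dots> = R @ \<alpha> @ P"
    using tail_ext_eq_lead_head[OF G walks(1)] R y unfolding P_def by simp
  finally have lab_ep: "walk_label G (tail G e) (e # ps) = R @ \<alpha> @ P" .
  obtain D where "\<alpha> = \<alpha>' @ D \<and> D @ P @ \<beta> = P @ \<beta>' \<or> \<alpha> @ D = \<alpha>' \<and> P @ \<beta> = D @ P @ \<beta>'"
    using eq append_eq_append_conv2[of \<alpha> "P @ \<beta>" \<alpha>' "P @ \<beta>'"] by blast
  then consider "D \<noteq> []" "\<alpha>' = \<alpha> @ D" "P @ \<beta> = D @ P @ \<beta>'"
    | "D \<noteq> []" "\<alpha> = \<alpha>' @ D" "D @ P @ \<beta> = P @ \<beta>'"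
    using ne by (elim disjE) auto
  then show False
  proof cases
    case 1
    have "P @ \<beta> @ T = D @ P @ \<beta>' @ T" using arg_cong[OF 1(3), of "\<lambda>x. x @ T"] by simp
    then have "proper_infix P (walk_label G y (ps @ [f]))"
      unfolding proper_infix_def lab_pf using 1(1) T(1) by blast
    then show False using non_redundant_not_proper_infix[OF NR walks(2,3)] lab_p by simp
  next
    case 2
    have "prefix (D @ P) (P @ \<beta>')" using 2(3) by (metis append.assoc prefixI)
    then have "prefix P (D @ P)" using prefix_length_prefix[of P "P @ \<beta>'" "D @ P"] by simp
    then obtain E where E: "D @ P = P @ E" by (auto simp: prefix_def)
    then have "E \<noteq> []" using 2(1) arg_cong[OF E, of length] by auto
    moreover have "walk_label G (tail G e) (e # ps) = (R @ \<alpha>') @ P @ E"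
      using lab_ep 2(2) E by simp
    ultimately have "proper_infix P (walk_label G (tail G e) (e # ps))"
      unfolding proper_infix_def using R(1) by blast
    then show False using non_redundant_not_proper_infix[OF NR walks(2,4)] lab_p by simp
  qed
qed

lemma frame_length_le:
  assumes F1: "frame G u y1 ps1 e1 f1 \<alpha>1 \<beta>1" and F2: "frame G u y2 ps2 e2 f2 \<alpha>2 \<beta>2"
  shows "length ps1 \<le> length ps2 \<and> (length ps1 = length ps2 \<longrightarrow> y1 = y2 \<and> ps1 = ps2)"
proof -
  obtain R where R: "R \<noteq> []" "arc_lead G e2 = R @ \<alpha>2" using F2 unfolding frame_def by blast
  obtain T where T: "T \<noteq> []" "arc_ext G f2 = \<beta>2 @ T" using F2 unfolding frame_def by blast
  have w2: "is_walk G (tail G e2) (e2 # ps2 @ [f2])" and y2: "head G e2 = y2"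
    using F2 unfolding frame_def by auto
  have e2: "e2 \<in> arcs G" and w1: "is_walk G y1 ps1" using frame_walks(1)[OF F2] frame_walks(2)[OF F1] .
  have "walk_label G (tail G e2) (e2 # ps2 @ [f2])
      = (vlab G (tail G e2) @ arc_ext G e2) @ walk_ext G ps2 @ arc_ext G f2"
    using walk_label_eq[OF G w2] by simp
  also have "\<dots> = arc_lead G e2 @ vlab G y2 @ walk_ext G ps2 @ arc_ext G f2"
    using tail_ext_eq_lead_head[OF G e2] y2 by simp
  also have "\<dots> = R @ u @ T" using R T F2 unfolding frame_def by simp
  also have "\<dots> = (R @ \<alpha>1) @ walk_label G y1 ps1 @ (\<beta>1 @ T)"
    using F1 walk_label_eq[OF G w1] unfolding frame_def by simp
  finally have "proper_infix (walk_label G y1 ps1) (walk_label G (tail G e2) (e2 # ps2 @ [f2]))"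
    unfolding proper_infix_def using R(1) T(1) by blast
  then obtain as bs where ab: "as \<noteq> []" "bs \<noteq> []" "e2 # ps2 @ [f2] = as @ ps1 @ bs"
    "walk_end G (tail G e2) as = y1"
    using NR w1 w2 unfolding non_redundant_def inner_subwalk_def by blast
  have L: "Suc (length ps2) + 1 = length as + length ps1 + length bs"
    using arg_cong[OF ab(3), of length] by simp
  have L1: "1 \<le> length as" "1 \<le> length bs" using ab(1,2) by (simp_all add: Suc_le_eq)
  have "length ps1 = length ps2 \<longrightarrow> y1 = y2 \<and> ps1 = ps2"
  proof
    assume "length ps1 = length ps2"
    then have "length as = 1" "length bs = 1" using L L1 by linarith+
    then obtain a b where "as = [a]" "bs = [b]" by (metis One_nat_def length_0_conv length_Suc_conv)
    then show "y1 = y2 \<and> ps1 = ps2" using ab y2 by auto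
  qed
  moreover have "length ps1 \<le> length ps2" using L L1 by linarith
  ultimately show ?thesis by blast
qed

lemma frame_rigid:
  assumes F1: "frame G u y1 ps1 e1 f1 \<alpha>1 \<beta>1" and F2: "frame G u y2 ps2 e2 f2 \<alpha>2 \<beta>2"
  shows "y1 = y2 \<and> \<alpha>1 = \<alpha>2"
proof -
  have "y1 = y2 \<and> ps1 = ps2"
    using frame_length_le[OF F1 F2] frame_length_le[OF F2 F1] by simp
  moreover from this have "\<alpha>1 = \<alpha>2"
    using frame_offset_unique[OF F2, of \<alpha>1 \<beta>1] F1 unfolding frame_def by simp
  ultimately show ?thesis by simp
qed

end

definition labels_bounded :: "('v, 'e, 'a) agraph \<Rightarrow> nat \<Rightarrow> bool" where
  "labels_bounded G L \<longleftrightarrow>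
     (\<forall>e\<in>arcs G. length (elab G e) \<le> L) \<and> (\<forall>v\<in>verts G. length (vlab G v) \<le> L)"

lemma finite_graph_labels_bounded: "finite_graph G \<Longrightarrow> \<exists>L. labels_bounded G L"
proof -
  assume "finite_graph G"
  then have "finite ((\<lambda>e. length (elab G e)) ` arcs G \<union> (\<lambda>v. length (vlab G v)) ` verts G)"
    unfolding finite_graph_def by simp
  then have "labels_bounded G (Max (insert 0 ((\<lambda>e. length (elab G e)) ` arcs G \<union>
      (\<lambda>v. length (vlab G v)) ` verts G)))"
    unfolding labels_bounded_def by auto
  then show ?thesis by blast
qed

lemma walk_cut_in_lead:
  assumes G: "abstract_assembly_graph G" and w: "is_walk G x es"
    and lab: "vlab G x @ walk_ext G es = \<gamma> @ z" and "\<gamma> \<noteq> []"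
    and short: "length (vlab G (walk_end G x es)) \<le> length z"
  shows "\<exists>ps e rs \<alpha>. es = ps @ e # rs \<and> (\<exists>R. R \<noteq> [] \<and> arc_lead G e = R @ \<alpha>) \<and>
           vlab G x @ walk_ext G (ps @ [e]) = \<gamma> @ \<alpha> @ vlab G (head G e)"
proof -
  define A where "A = concat (map (arc_lead G) es)"
  have eq: "\<gamma> @ z = A @ vlab G (walk_end G x es)"
    using walk_label_eq_leads[OF G w] lab unfolding A_def by simp
  have "length \<gamma> + length z = length A + length (vlab G (walk_end G x es))"
    using arg_cong[OF eq, of length] by simp
  then have "length \<gamma> \<le> length A" using short by linarith
  then obtain A' where "A = \<gamma> @ A'" using append_eq_append_shorter[OF eq] by blast
  then obtain ps e rs R \<alpha> where ps: "es = ps @ e # rs" "arc_lead G e = R @ \<alpha>" "R \<noteq> []"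
    "\<gamma> = concat (map (arc_lead G) ps) @ R"
    using concat_map_cut_after_start[of "arc_lead G" es \<gamma>] \<open>\<gamma> \<noteq> []\<close> unfolding A_def by blast
  have "is_walk G x (ps @ [e])" using w ps(1) is_walk_append[of G x "ps @ [e]" rs] by simp
  then have "vlab G x @ walk_ext G (ps @ [e]) = concat (map (arc_lead G) (ps @ [e])) @ vlab G (head G e)"
    using walk_label_eq_leads[OF G, of x "ps @ [e]"] by (simp add: walk_end_def)
  then show ?thesis using ps by auto
qed

text \<open>The frame begins with the arc whose lead contains the last letter of \<open>\<gamma>\<close> and ends with
  the arc whose extension contains the letter after \<open>u\<close>.\<close>

lemma frame_exists:
  assumes G: "abstract_assembly_graph G" and w: "is_walk G x es"
    and lab: "vlab G x @ walk_ext G es = \<gamma> @ u @ \<eta>" and "\<gamma> \<noteq> []" "\<eta> \<noteq> []"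
    and B: "labels_bounded G L" and L: "L \<le> length u"
  shows "\<exists>qs rs y ps e f \<alpha> \<beta>. es = qs @ rs \<and> walk_end G x qs = y \<and>
           vlab G x @ walk_ext G qs = \<gamma> @ \<alpha> @ vlab G y \<and> frame G u y ps e f \<alpha> \<beta>"
proof -
  have "length (vlab G (walk_end G x es)) \<le> length (u @ \<eta>)"
    using B walk_end_in_verts[OF w] L unfolding labels_bounded_def by fastforce
  then obtain ps0 e rs \<alpha> where es: "es = ps0 @ e # rs" and R: "\<exists>R. R \<noteq> [] \<and> arc_lead G e = R @ \<alpha>"
    and lab_qs: "vlab G x @ walk_ext G (ps0 @ [e]) = \<gamma> @ \<alpha> @ vlab G (head G e)"
    using walk_cut_in_lead[OF G w lab \<open>\<gamma> \<noteq> []\<close>] by blast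
  define y where "y = head G e"
  have wqs: "is_walk G x (ps0 @ [e])" and wrs: "is_walk G y rs"
    using w es is_walk_append[of G x "ps0 @ [e]" rs] unfolding y_def by (auto simp: walk_end_def)
  have e: "e \<in> arcs G" using wqs by (simp add: is_walk_append)
  have "\<gamma> @ \<alpha> @ vlab G y @ walk_ext G rs = \<gamma> @ u @ \<eta>"
    using lab lab_qs es unfolding y_def
    by (metis append.assoc append_Cons append_Nil walk_ext_append)
  then have eq: "\<alpha> @ vlab G y @ walk_ext G rs = u @ \<eta>" by simp
  have "length (\<alpha> @ vlab G y) \<le> length (elab G e)"
    using elab_eq_lead_head[OF G e] R unfolding y_def by auto
  then have "length (\<alpha> @ vlab G y) \<le> length u" using B e L unfolding labels_bounded_def by fastforce
  then obtain w' where u: "u = \<alpha> @ vlab G y @ w'" and rs: "walk_ext G rs = w' @ \<eta>"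
    using append_eq_append_shorter[of "\<alpha> @ vlab G y" "walk_ext G rs" u \<eta>] eq by auto
  obtain ps f rs' \<beta> T where ps: "rs = ps @ f # rs'" "arc_ext G f = \<beta> @ T" "T \<noteq> []"
    "w' = walk_ext G ps @ \<beta>"
    using concat_map_cut_before_end[of "arc_ext G" rs w' \<eta>] rs \<open>\<eta> \<noteq> []\<close>
    unfolding walk_ext_def by blast
  have "is_walk G y (ps @ [f])" using wrs ps(1) is_walk_append[of G y "ps @ [f]" rs'] by simp
  then have "is_walk G (tail G e) (e # ps @ [f])"
    using wqs e unfolding y_def by (auto simp: is_walk_append)
  then have "frame G u y ps e f \<alpha> \<beta>"
    unfolding frame_def using u ps R y_def by auto
  moreover have "es = (ps0 @ [e]) @ rs" "walk_end G x (ps0 @ [e]) = y"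
    using es unfolding y_def by (auto simp: walk_end_def)
  ultimately show ?thesis using lab_qs unfolding y_def by blast
qed

lemma conjugate_loop_at_frame:
  assumes G: "abstract_assembly_graph G" and NR: "non_redundant G"
    and B: "labels_bounded G L" and L: "L \<le> length v"
    and w: "is_walk G x es" and lab: "vlab G x @ walk_ext G es = \<gamma> @ v @ a @ \<eta>"
    and "\<gamma> \<noteq> []" "\<eta> \<noteq> []" and va: "v @ a = a' @ v" and "a \<noteq> []"
  shows "\<exists>y ps e f \<alpha> \<beta> R. frame G v y ps e f \<alpha> \<beta> \<and>
           is_walk G y R \<and> R \<noteq> [] \<and> walk_end G y R = y \<and>
           \<alpha> @ vlab G y @ walk_ext G R = a' @ \<alpha> @ vlab G y"
proof -
  have "a @ \<eta> \<noteq> []" "\<gamma> @ a' \<noteq> []" using \<open>\<eta> \<noteq> []\<close> \<open>\<gamma> \<noteq> []\<close> by simp_all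
  obtain qs1 rs1 y ps e f \<alpha> \<beta> where F1: "es = qs1 @ rs1" "walk_end G x qs1 = y"
      "vlab G x @ walk_ext G qs1 = \<gamma> @ \<alpha> @ vlab G y" "frame G v y ps e f \<alpha> \<beta>"
    using frame_exists[OF G w lab \<open>\<gamma> \<noteq> []\<close> \<open>a @ \<eta> \<noteq> []\<close> B L] by blast
  have "vlab G x @ walk_ext G es = (\<gamma> @ a') @ v @ \<eta>" using lab arg_cong[OF va, of "\<lambda>t. \<gamma> @ t @ \<eta>"] by simp
  then obtain qs2 rs2 y2 ps2 e2 f2 \<alpha>2 \<beta>2 where F2: "es = qs2 @ rs2" "walk_end G x qs2 = y2"
      "vlab G x @ walk_ext G qs2 = (\<gamma> @ a') @ \<alpha>2 @ vlab G y2" "frame G v y2 ps2 e2 f2 \<alpha>2 \<beta>2"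
    using frame_exists[OF G w _ \<open>\<gamma> @ a' \<noteq> []\<close> \<open>\<eta> \<noteq> []\<close> B L] by blast
  have same: "y2 = y" "\<alpha>2 = \<alpha>" using frame_rigid[OF G NR F2(4) F1(4)] by auto
  have la': "length a' = length a" using arg_cong[OF va, of length] by simp
  have "prefix qs1 qs2"
  proof (rule ccontr)
    assume "\<not> prefix qs1 qs2"
    moreover have "prefix qs1 es" "prefix qs2 es" using F1(1) F2(1) by (metis prefixI)+
    ultimately have "prefix qs2 qs1" using prefix_same_cases by blast
    then obtain D where "qs1 = qs2 @ D" by (auto simp: prefix_def)
    then have "length (vlab G x @ walk_ext G qs2) \<le> length (vlab G x @ walk_ext G qs1)" by simp
    then show False using F1(3) F2(3) same la' \<open>a \<noteq> []\<close> by simp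
  qed
  then obtain R where qs2: "qs2 = qs1 @ R" by (auto simp: prefix_def)
  have "(vlab G x @ walk_ext G qs1) @ walk_ext G R = \<gamma> @ a' @ \<alpha> @ vlab G y"
    using F2(3) same qs2 by simp
  then have "(\<gamma> @ \<alpha> @ vlab G y) @ walk_ext G R = \<gamma> @ a' @ \<alpha> @ vlab G y" unfolding F1(3) .
  then have conj: "\<alpha> @ vlab G y @ walk_ext G R = a' @ \<alpha> @ vlab G y" by simp
  moreover have "R \<noteq> []" using arg_cong[OF conj, of length] la' \<open>a \<noteq> []\<close> by auto
  moreover have "is_walk G y R" using w F1(2) unfolding F2(1) qs2 by (simp add: is_walk_append)
  moreover have "walk_end G y R = y" using F1(2) F2(2) same by (simp add: qs2 walk_end_append)
  ultimately show ?thesis using F1(4) by blast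
qed

lemma closed_walk_unroll:
  assumes G: "assembly_graph G" and w: "is_walk G x es" "es \<noteq> []" "walk_end G x es = x"
    and cyc: "cyc (walk_ext G es) = cyc a" and va: "v @ a = a' @ v" "a \<noteq> []"
  shows "\<exists>m \<gamma> \<eta>. \<gamma> \<noteq> [] \<and> \<eta> \<noteq> [] \<and> is_walk G x (concat (replicate m es)) \<and>
           vlab G x @ walk_ext G (concat (replicate m es)) = \<gamma> @ v @ a @ \<eta>"
proof -
  define z where "z = walk_ext G es"
  have z: "z \<noteq> []" using closed_walk_ext_nonempty[OF G w] unfolding z_def .
  obtain p where p: "window (bi_power a) p (length v + length a) = v @ a"
    using conjugate_window[OF va] by blast
  have "bi_power a \<in> cyc a" using self_in_shifts by (simp add: cyc_eq_shifts)
  then have "bi_power a \<in> shifts (bi_power z)" using cyc cyc_eq_shifts[of z] unfolding z_def by simp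
  then obtain k where "bi_power a = shift k (bi_power z)" unfolding shifts_def by auto
  then have "window (bi_power z) (p + k) (length v + length a) = v @ a"
    using p window_shift[of k "bi_power z" p] by simp
  then obtain m \<gamma> \<eta> where "\<gamma> \<noteq> []" "\<eta> \<noteq> []" "concat (replicate m z) = \<gamma> @ (v @ a) @ \<eta>"
    using window_in_power[OF z, of "p + k" "length v + length a"] by auto
  then have "vlab G x @ walk_ext G (concat (replicate m es)) = (vlab G x @ \<gamma>) @ v @ a @ \<eta>"
    unfolding z_def walk_ext_replicate by simp
  then show ?thesis using closed_walk_replicate[OF w(1,3)] \<open>\<gamma> \<noteq> []\<close> \<open>\<eta> \<noteq> []\<close> by blast
qed

lemma conjugate_loop_in_CPC:
  assumes G: "abstract_assembly_graph G" and R: "is_walk G y R" "R \<noteq> []" "walk_end G y R = y"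
    and loop: "t @ walk_ext G R = a' @ t" and va: "v @ a = a' @ v" "a \<noteq> []"
  shows "cyc a \<in> CPC G"
proof -
  have "length (walk_ext G R) = length a"
    using arg_cong[OF loop, of length] arg_cong[OF va(1), of length] by simp
  then have "walk_ext G R \<noteq> []" using va(2) by auto
  then have "cyc a' = cyc (walk_ext G R)" using cyc_conjugate[OF loop] by simp
  moreover have "cyc a' = cyc a" using cyc_conjugate[OF va] .
  ultimately show ?thesis using CPC_iff_closed_walk[OF G] R by metis
qed

context
  fixes G :: "('v, 'e, 'a) agraph" and L :: nat
  assumes G: "assembly_graph G" and NR: "non_redundant G" and B: "labels_bounded G L"
begin

private lemmas AG = assembly_graph_abstract[OF G]

lemma CPC_conjugate_loop:
  assumes L: "L \<le> length v" and c: "cyc a \<in> CPC G" and va: "v @ a = a' @ v" "a \<noteq> []"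
  shows "\<exists>y ps e f \<alpha> \<beta> R. frame G v y ps e f \<alpha> \<beta> \<and>
           is_walk G y R \<and> R \<noteq> [] \<and> walk_end G y R = y \<and>
           \<alpha> @ vlab G y @ walk_ext G R = a' @ \<alpha> @ vlab G y"
proof -
  obtain x es where W: "is_walk G x es" "es \<noteq> []" "walk_end G x es = x"
    "cyc (walk_ext G es) = cyc a"
    using c CPC_iff_closed_walk[OF AG] by metis
  obtain m \<gamma> \<eta> where "\<gamma> \<noteq> []" "\<eta> \<noteq> []" "is_walk G x (concat (replicate m es))"
    "vlab G x @ walk_ext G (concat (replicate m es)) = \<gamma> @ v @ a @ \<eta>"
    using closed_walk_unroll[OF G W va] by blast
  then show ?thesis using conjugate_loop_at_frame[OF AG NR B L _ _ _ _ va] by blast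
qed

lemma CPC_appendD:
  assumes L: "L \<le> length v" and va: "v @ a = a' @ v" "a \<noteq> []" and vb: "v @ b = b' @ v" "b \<noteq> []"
    and ab: "cyc (a @ b) \<in> CPC G"
  shows "cyc a \<in> CPC G \<and> cyc b \<in> CPC G"
proof -
  obtain x es where W: "is_walk G x es" "es \<noteq> []" "walk_end G x es = x"
    "cyc (walk_ext G es) = cyc (a @ b)"
    using ab CPC_iff_closed_walk[OF AG] by metis
  have "v @ a @ b = (a' @ b') @ v" using arg_cong[OF va(1), of "\<lambda>t. t @ b"] vb(1) by simp
  then obtain m \<gamma> \<eta> where U: "\<gamma> \<noteq> []" "\<eta> \<noteq> []" "is_walk G x (concat (replicate m es))"
    "vlab G x @ walk_ext G (concat (replicate m es)) = \<gamma> @ v @ (a @ b) @ \<eta>"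
    using closed_walk_unroll[OF G W] va(2) by blast
  have "vlab G x @ walk_ext G (concat (replicate m es)) = \<gamma> @ v @ a @ b @ \<eta>" using U(4) by simp
  then obtain y ps e f \<alpha> \<beta> R where "is_walk G y R" "R \<noteq> []" "walk_end G y R = y"
    "(\<alpha> @ vlab G y) @ walk_ext G R = a' @ \<alpha> @ vlab G y"
    using conjugate_loop_at_frame[OF AG NR B L U(3) _ U(1) _ va] U(2) by auto
  then have "cyc a \<in> CPC G" using conjugate_loop_in_CPC[OF AG _ _ _ _ va] by blast
  have "vlab G x @ walk_ext G (concat (replicate m es)) = (\<gamma> @ a') @ v @ b @ \<eta>"
    using U(4) arg_cong[OF va(1), of "\<lambda>t. \<gamma> @ t @ b @ \<eta>"] by simp
  then obtain y ps e f \<alpha> \<beta> R where "is_walk G y R" "R \<noteq> []" "walk_end G y R = y"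
    "(\<alpha> @ vlab G y) @ walk_ext G R = b' @ \<alpha> @ vlab G y"
    using conjugate_loop_at_frame[OF AG NR B L U(3) _ _ U(2) vb] U(1) by auto
  then have "cyc b \<in> CPC G" using conjugate_loop_in_CPC[OF AG _ _ _ _ vb] by blast
  with \<open>cyc a \<in> CPC G\<close> show ?thesis by blast
qed

lemma CPC_appendI:
  assumes L: "L \<le> length v" and va: "v @ a = a' @ v" "a \<noteq> []" and vb: "v @ b = b' @ v" "b \<noteq> []"
    and "cyc a \<in> CPC G" "cyc b \<in> CPC G"
  shows "cyc (a @ b) \<in> CPC G"
proof -
  obtain y ps e f \<alpha> \<beta> Ra where A: "frame G v y ps e f \<alpha> \<beta>" "is_walk G y Ra" "Ra \<noteq> []"
    "walk_end G y Ra = y" "\<alpha> @ vlab G y @ walk_ext G Ra = a' @ \<alpha> @ vlab G y"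
    using CPC_conjugate_loop[OF L \<open>cyc a \<in> CPC G\<close> va] by blast
  obtain y2 ps2 e2 f2 \<alpha>2 \<beta>2 Rb where B: "frame G v y2 ps2 e2 f2 \<alpha>2 \<beta>2" "is_walk G y2 Rb"
    "walk_end G y2 Rb = y2" "\<alpha>2 @ vlab G y2 @ walk_ext G Rb = b' @ \<alpha>2 @ vlab G y2"
    using CPC_conjugate_loop[OF L \<open>cyc b \<in> CPC G\<close> vb] by blast
  have same: "y2 = y" "\<alpha>2 = \<alpha>" using frame_rigid[OF AG NR B(1) A(1)] by auto
  have "(\<alpha> @ vlab G y) @ walk_ext G (Ra @ Rb)
      = (\<alpha> @ vlab G y @ walk_ext G Ra) @ walk_ext G Rb" by simp
  also have "\<dots> = a' @ \<alpha> @ vlab G y @ walk_ext G Rb" using A(5) by simp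
  also have "\<dots> = (a' @ b') @ \<alpha> @ vlab G y" using B(4) same by simp
  finally have "(\<alpha> @ vlab G y) @ walk_ext G (Ra @ Rb) = (a' @ b') @ \<alpha> @ vlab G y" .
  moreover have "is_walk G y (Ra @ Rb)" "walk_end G y (Ra @ Rb) = y"
    using A(2,4) B(2,3) same by (simp_all add: is_walk_append walk_end_append)
  moreover have "v @ a @ b = (a' @ b') @ v" using arg_cong[OF va(1), of "\<lambda>t. t @ b"] vb(1) by simp
  ultimately show ?thesis
    using conjugate_loop_in_CPC[OF AG _ _ _ _ _ ] A(3) va(2) by blast
qed

end

theorem graph_finitely_conducting:
  assumes "finite_graph G" "assembly_graph G" "non_redundant G"
  shows "finitely_conducting (CPC G)"
proof -
  obtain L where B: "labels_bounded G L" using finite_graph_labels_bounded[OF assms(1)] ..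
  have "conductor (CPC G) v" if "L \<le> length v" for v
    unfolding conductor_def
  proof (intro allI impI)
    fix a b assume "a \<noteq> []" "b \<noteq> []" "suffix v (v @ a)" "suffix v (v @ b)"
    then obtain a' b' where "v @ a = a' @ v" "v @ b = b' @ v" by (auto simp: suffix_def)
    then show "cyc (a @ b) \<in> CPC G \<longleftrightarrow> cyc a \<in> CPC G \<and> cyc b \<in> CPC G"
      using CPC_appendD[OF assms(2,3) B that] CPC_appendI[OF assms(2,3) B that]
        \<open>a \<noteq> []\<close> \<open>b \<noteq> []\<close> by blast
  qed
  then show ?thesis unfolding finitely_conducting_def by blast
qed

section \<open>De Bruijn graphs\<close>

definition de_bruijn_graph :: "('v, 'e, 'a) agraph \<Rightarrow> nat \<Rightarrow> bool" where
  "de_bruijn_graph G n \<longleftrightarrow>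
     (\<forall>e\<in>arcs G. tail G e \<in> verts G \<and> head G e \<in> verts G \<and> length (elab G e) = Suc n \<and>
        vlab G (tail G e) = take n (elab G e) \<and> vlab G (head G e) = drop 1 (elab G e)) \<and>
     (\<forall>v\<in>verts G. length (vlab G v) = n) \<and> inj_on (vlab G) (verts G) \<and> inj_on (elab G) (arcs G)"

context
  fixes G :: "('v, 'e, 'a) agraph" and n :: nat
  assumes D: "de_bruijn_graph G n"
begin

lemma de_bruijn_abstract: "abstract_assembly_graph G"
  using D unfolding de_bruijn_graph_def abstract_assembly_graph_def
  by (auto simp: suffix_drop take_is_prefix)

lemma de_bruijn_vlab_length: "v \<in> verts G \<Longrightarrow> length (vlab G v) = n"
  using D unfolding de_bruijn_graph_def by blast

lemma de_bruijn_vlab_inj: "u \<in> verts G \<Longrightarrow> v \<in> verts G \<Longrightarrow> vlab G u = vlab G v \<Longrightarrow> u = v"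
  using D unfolding de_bruijn_graph_def by (meson inj_onD)

lemma de_bruijn_elab_inj: "e \<in> arcs G \<Longrightarrow> e' \<in> arcs G \<Longrightarrow> elab G e = elab G e' \<Longrightarrow> e = e'"
  using D unfolding de_bruijn_graph_def by (meson inj_onD)

lemma de_bruijn_arc:
  assumes "e \<in> arcs G"
  shows "length (elab G e) = Suc n" "vlab G (tail G e) = take n (elab G e)"
    "vlab G (head G e) = drop 1 (elab G e)" "tail G e \<in> verts G" "head G e \<in> verts G"
  using assms D unfolding de_bruijn_graph_def by blast+

lemma de_bruijn_ext_lead_length:
  assumes "e \<in> arcs G"
  shows "length (arc_ext G e) = 1" "length (arc_lead G e) = 1"
  using de_bruijn_arc[OF assms] unfolding arc_ext_def arc_lead_def by auto

lemma de_bruijn_length_walk_ext: "set es \<subseteq> arcs G \<Longrightarrow> length (walk_ext G es) = length es"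
  by (induction es) (auto simp: de_bruijn_ext_lead_length)

lemma de_bruijn_length_leads:
  "set es \<subseteq> arcs G \<Longrightarrow> length (concat (map (arc_lead G) es)) = length es"
  by (induction es) (auto simp: de_bruijn_ext_lead_length)

lemma de_bruijn_walk_label_length:
  assumes "is_walk G x es"
  shows "length (vlab G x @ walk_ext G es) = n + length es"
  using de_bruijn_length_walk_ext[OF is_walk_arcs[OF assms]]
    de_bruijn_vlab_length[OF is_walk_start_in_verts[OF assms]] by simp

lemma de_bruijn_drop_walk_label:
  assumes w: "is_walk G x es" and j: "j \<le> length es"
  shows "drop j (vlab G x @ walk_ext G es)
       = vlab G (walk_end G x (take j es)) @ walk_ext G (drop j es)"
proof -
  have "vlab G x @ walk_ext G es = (vlab G x @ walk_ext G (take j es)) @ walk_ext G (drop j es)"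
    using walk_ext_append[of G "take j es" "drop j es"] by simp
  also have "\<dots> = concat (map (arc_lead G) (take j es)) @
      vlab G (walk_end G x (take j es)) @ walk_ext G (drop j es)"
    using walk_label_eq_leads[OF de_bruijn_abstract is_walk_take[OF w]] by simp
  finally have "vlab G x @ walk_ext G es = concat (map (arc_lead G) (take j es)) @
      vlab G (walk_end G x (take j es)) @ walk_ext G (drop j es)" .
  moreover have "set (take j es) \<subseteq> arcs G" using is_walk_arcs[OF is_walk_take[OF w]] .
  then have "length (concat (map (arc_lead G) (take j es))) = j"
    using de_bruijn_length_leads j by simp
  ultimately show ?thesis by simp
qed

lemma de_bruijn_vlab_at:
  assumes "is_walk G x es" "j \<le> length es"
  shows "vlab G (walk_end G x (take j es)) = take n (drop j (vlab G x @ walk_ext G es))"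
  using de_bruijn_drop_walk_label[OF assms] de_bruijn_vlab_length
    walk_end_in_verts[OF is_walk_take[OF assms(1)]] by simp

lemma de_bruijn_elab_at:
  assumes w: "is_walk G x es" and j: "j < length es"
  shows "elab G (es ! j) = take (Suc n) (drop j (vlab G x @ walk_ext G es))"
proof -
  have es: "drop j es = es ! j # drop (Suc j) es" using j by (simp add: Cons_nth_drop_Suc)
  have "is_walk G x (take j es @ es ! j # drop (Suc j) es)" using w es by (metis append_take_drop_id)
  then have e: "es ! j \<in> arcs G" "tail G (es ! j) = walk_end G x (take j es)"
    by (auto simp: is_walk_append)
  have "drop j (vlab G x @ walk_ext G es) = elab G (es ! j) @ walk_ext G (drop (Suc j) es)"
    using de_bruijn_drop_walk_label[OF w] j es e elab_eq_tail_ext[OF de_bruijn_abstract] by simp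
  then show ?thesis using de_bruijn_arc(1)[OF e(1)] by simp
qed

lemma de_bruijn_walk_label_inj:
  assumes p: "is_walk G p ps" and q: "is_walk G q qs"
    and eq: "vlab G p @ walk_ext G ps = vlab G q @ walk_ext G qs"
  shows "p = q \<and> ps = qs"
proof
  have lp: "length (vlab G p) = n" "length (vlab G q) = n"
    using de_bruijn_vlab_length[OF is_walk_start_in_verts[OF p]]
      de_bruijn_vlab_length[OF is_walk_start_in_verts[OF q]] by simp_all
  have "vlab G p = take n (vlab G p @ walk_ext G ps)" using lp by simp
  also have "\<dots> = take n (vlab G q @ walk_ext G qs)" using eq by simp
  also have "\<dots> = vlab G q" using lp by simp
  finally have "vlab G p = vlab G q" .
  then show "p = q"
    by (rule de_bruijn_vlab_inj[OF is_walk_start_in_verts[OF p] is_walk_start_in_verts[OF q]])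
  have "n + length ps = n + length qs"
    using de_bruijn_walk_label_length[OF p] de_bruijn_walk_label_length[OF q] unfolding eq by simp
  then have len: "length ps = length qs" by simp
  show "ps = qs"
  proof (rule nth_equalityI)
    fix j assume j: "j < length ps"
    have "elab G (ps ! j) = take (Suc n) (drop j (vlab G q @ walk_ext G qs))"
      using de_bruijn_elab_at[OF p j] unfolding eq .
    also have "\<dots> = elab G (qs ! j)" using de_bruijn_elab_at[OF q, of j] j len by simp
    finally have "elab G (ps ! j) = elab G (qs ! j)" .
    moreover have "ps ! j \<in> set ps" "qs ! j \<in> set qs" using j len by simp_all
    then have "ps ! j \<in> arcs G" "qs ! j \<in> arcs G"
      using is_walk_arcs[OF p] is_walk_arcs[OF q] by blast+
    ultimately show "ps ! j = qs ! j" using de_bruijn_elab_inj[of "ps ! j" "qs ! j"] by blast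
  qed (rule len)
qed

lemma de_bruijn_non_redundant: "non_redundant G"
  unfolding non_redundant_def
proof (intro allI impI)
  fix p ps q qs
  assume p: "is_walk G p ps" and q: "is_walk G q qs"
    and "proper_infix (walk_label G p ps) (walk_label G q qs)"
  then obtain A B where AB: "A \<noteq> []" "B \<noteq> []"
    "vlab G q @ walk_ext G qs = A @ (vlab G p @ walk_ext G ps) @ B"
    unfolding proper_infix_def walk_label_eq[OF de_bruijn_abstract p]
      walk_label_eq[OF de_bruijn_abstract q] by blast
  define i where "i = length A"
  have len: "length qs = i + length ps + length B"
    using arg_cong[OF AB(3), of length] de_bruijn_walk_label_length[OF p]
      de_bruijn_walk_label_length[OF q] unfolding i_def by simp
  define as where "as = take i qs"
  define rest where "rest = drop i qs"
  define mid where "mid = take (length ps) rest"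
  define bs where "bs = drop (length ps) rest"
  have rest: "rest = mid @ bs" unfolding mid_def bs_def by simp
  have qs: "qs = as @ mid @ bs" unfolding rest[symmetric] as_def rest_def by simp
  have w: "is_walk G q as" "is_walk G (walk_end G q as) mid" "is_walk G (walk_end G (walk_end G q as) mid) bs"
    using q unfolding qs by (simp_all add: is_walk_append)
  have "(vlab G (walk_end G q as) @ walk_ext G mid) @ walk_ext G bs = drop i (vlab G q @ walk_ext G qs)"
    using de_bruijn_drop_walk_label[OF q, of i] len rest
    unfolding as_def[symmetric] rest_def[symmetric] by simp
  also have "\<dots> = (vlab G p @ walk_ext G ps) @ B" using AB(3) unfolding i_def by simp
  finally have "(vlab G (walk_end G q as) @ walk_ext G mid) @ walk_ext G bs = (vlab G p @ walk_ext G ps) @ B" .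
  moreover have "length (vlab G (walk_end G q as) @ walk_ext G mid) = length (vlab G p @ walk_ext G ps)"
    using de_bruijn_walk_label_length[OF w(2)] de_bruijn_walk_label_length[OF p] len
    unfolding mid_def rest_def by simp
  ultimately have "vlab G (walk_end G q as) @ walk_ext G mid = vlab G p @ walk_ext G ps"
    using append_eq_append_conv by blast
  then have "walk_end G q as = p \<and> mid = ps" using de_bruijn_walk_label_inj[OF w(2) p] by blast
  moreover have "as \<noteq> []" "bs \<noteq> []" using AB(1,2) len unfolding as_def bs_def rest_def i_def by auto
  ultimately show "inner_subwalk G p ps q qs"
    unfolding inner_subwalk_def using qs w by blast
qed

lemma de_bruijn_label_Cons:
  assumes e: "e \<in> arcs G" "tail G e = v"
  shows "vlab G v @ walk_ext G (e # es) = hd (elab G e) # vlab G (head G e) @ walk_ext G es"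
proof -
  have "elab G e = arc_lead G e @ vlab G (head G e)"
    using elab_eq_lead_head[OF de_bruijn_abstract e(1)] .
  moreover have "length (arc_lead G e) = 1" using de_bruijn_ext_lead_length[OF e(1)] by simp
  ultimately have "elab G e = hd (elab G e) # vlab G (head G e)"
    by (cases "arc_lead G e") auto
  then show ?thesis using elab_eq_tail_ext[OF de_bruijn_abstract e(1)] e(2)
    by (metis append.assoc append_Cons walk_ext_Cons)
qed

lemma de_bruijn_walk_of_word:
  assumes v: "v \<in> verts G" "vlab G v = take n s" and "n \<le> length s"
    and W: "\<forall>j. j + Suc n \<le> length s \<longrightarrow> take (Suc n) (drop j s) \<in> elab G ` arcs G"
  shows "\<exists>es. is_walk G v es \<and> vlab G v @ walk_ext G es = s"
  using assms
proof (induction s arbitrary: v)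
  case Nil
  then show ?case by (intro exI[of _ "[]"]) simp
next
  case (Cons c s)
  show ?case
  proof (cases "length s < n")
    case True
    then show ?thesis using Cons.prems by (intro exI[of _ "[]"]) simp
  next
    case False
    then obtain e where e: "e \<in> arcs G" "elab G e = take (Suc n) (c # s)"
      using Cons.prems(4)[rule_format, of 0] by force
    have "vlab G (tail G e) = vlab G v"
      using de_bruijn_arc(2)[OF e(1)] e(2) Cons.prems(2) by (cases n) auto
    then have tv: "tail G e = v"
      using de_bruijn_vlab_inj[OF de_bruijn_arc(4)[OF e(1)] Cons.prems(1)] by blast
    have hv: "head G e \<in> verts G" "vlab G (head G e) = take n s"
      using de_bruijn_arc[OF e(1)] e(2) by auto
    have "\<forall>j. j + Suc n \<le> length s \<longrightarrow> take (Suc n) (drop j s) \<in> elab G ` arcs G"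
      using Cons.prems(4)[rule_format, of "Suc _"] by simp
    then obtain es where es: "is_walk G (head G e) es" "vlab G (head G e) @ walk_ext G es = s"
      using Cons.IH[OF hv] False by auto
    have "vlab G v @ walk_ext G (e # es) = hd (elab G e) # vlab G (head G e) @ walk_ext G es"
      by (rule de_bruijn_label_Cons[OF e(1) tv])
    also have "\<dots> = c # s" using es(2) e(2) by simp
    moreover have "is_walk G v (e # es)" using es(1) e(1) tv Cons.prems(1) by simp
    ultimately show ?thesis by blast
  qed
qed

end

lemma chromosome_set_periodic:
  assumes "chromosome_set C" "c \<in> C" "f \<in> c"
  shows "\<exists>p>0. periodic f p \<and> c = shifts f"
proof -
  obtain x where x: "x \<noteq> []" "c = cyc x"
    using assms unfolding chromosome_set_def is_cyclic_def by blast
  then obtain k where "f = shift k (bi_power x)"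
    using assms(3) unfolding cyc_eq_shifts shifts_def by auto
  then have "periodic f (length x)" using periodic_shift[OF periodic_bi_power[OF x(1)]] by simp
  then show ?thesis using x cyc_eq_shifts_mem assms(3) by auto
qed

lemma chromosome_set_shift_mem:
  "chromosome_set C \<Longrightarrow> c \<in> C \<Longrightarrow> f \<in> c \<Longrightarrow> shift k f \<in> c"
  using chromosome_set_periodic shift_in_shifts by metis

definition factors :: "(int \<Rightarrow> 'a) set set \<Rightarrow> nat \<Rightarrow> 'a list set" where
  "factors C n = {window f 0 n | f. f \<in> \<Union>C}"

lemma length_factors: "w \<in> factors C n \<Longrightarrow> length w = n"
  unfolding factors_def by auto

lemma finite_factors: "finite (factors (C :: (int \<Rightarrow> 'a::finite) set set) n)"
proof -
  have "factors C n \<subseteq> {xs. set xs \<subseteq> UNIV \<and> length xs = n}" unfolding factors_def by auto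
  then show ?thesis using finite_lists_length_eq[OF finite_UNIV, of n] finite_subset by blast
qed

lemma window_in_factors:
  assumes "chromosome_set C" "c \<in> C" "f \<in> c"
  shows "window f i n \<in> factors C n"
proof -
  have "window f i n = window (shift i f) 0 n" by (simp add: window_shift)
  then show ?thesis
    unfolding factors_def using chromosome_set_shift_mem[OF assms] assms(2) by blast
qed

lemma take_factor: "w \<in> factors C (Suc n) \<Longrightarrow> take n w \<in> factors C n"
  unfolding factors_def by (auto simp: take_window)

lemma drop_factor:
  assumes "chromosome_set C" "w \<in> factors C (Suc n)"
  shows "drop 1 w \<in> factors C n"
proof -
  obtain f c where "w = window f 0 (Suc n)" "c \<in> C" "f \<in> c"
    using assms(2) unfolding factors_def by blast
  then show ?thesis using window_in_factors[OF assms(1)] by (simp add: drop_window)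
qed

text \<open>In the de Bruijn graph of order \<open>n\<close>, a word \<open>s\<close> with \<open>n \<le> length s\<close> labels a walk whose
  extension is \<open>drop n s\<close>. It is closable if that walk can be prolonged by \<open>r\<close> to a closed walk
  (\<open>s @ r\<close> ends with the first \<open>n\<close> letters of \<open>s\<close>) whose cyclic label lies in \<open>C\<close>.\<close>

definition closable :: "(int \<Rightarrow> 'a) set set \<Rightarrow> nat \<Rightarrow> 'a list \<Rightarrow> bool" where
  "closable C n s \<longleftrightarrow>
     (\<exists>r. suffix (take n s) (s @ r) \<and> drop n s @ r \<noteq> [] \<and> cyc (drop n s @ r) \<in> C)"

lemma factor_closable:
  assumes C: "chromosome_set C" and w: "w \<in> factors C (Suc n)"
  shows "closable C n w"
proof -
  obtain f c where f: "w = window f 0 (Suc n)" "c \<in> C" "f \<in> c"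
    using w unfolding factors_def by blast
  obtain p where p: "p > 0" "periodic f p" "c = shifts f"
    using chromosome_set_periodic[OF C f(2,3)] by blast
  define r where "r = window f (int (Suc n)) (p - 1)"
  have wr: "w @ r = window f 0 (n + p)"
    unfolding f(1) r_def using window_add[of f 0 "Suc n" "p - 1"] p(1) by simp
  also have "\<dots> = window f 0 p @ window f 0 n"
    using window_add[of f 0 p n] window_periodic_shift[OF p(2), of 0 1 n] by (simp add: add.commute)
  finally have "suffix (take n w) (w @ r)" unfolding f(1) by (simp add: take_window suffix_def)
  moreover have "drop n w @ r = drop n (w @ r)" unfolding f(1) by simp
  then have "drop n w @ r = window f (int n) p"
    unfolding wr using drop_window[of n "n + p" f 0] by simp
  moreover have "cyc (window f (int n) p) = c" using cyc_window[OF p(2,1)] p(3) by simp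
  moreover have "window f (int n) p \<noteq> []" using p(1) by simp
  ultimately have "suffix (take n w) (w @ r) \<and> drop n w @ r \<noteq> [] \<and> cyc (drop n w @ r) \<in> C"
    using f(2) by simp
  then show ?thesis unfolding closable_def by blast
qed

text \<open>Here the conductor property is applied to the last \<open>n\<close> letters of \<open>s\<close>, splicing the closing
  cycle of \<open>s\<close> with that of the arc label \<open>e\<close>.\<close>

lemma closable_snoc:
  assumes cond: "\<forall>w. length w = n \<longrightarrow> conductor C w"
    and s: "closable C n s" "n \<le> length s"
    and e: "closable C n e" "length e = Suc n" "take n e = drop (length s - n) s"
  shows "closable C n (s @ [last e])"
proof -
  define u where "u = take n s"
  define p where "p = drop n s"
  define w where "w = drop (length s - n) s"
  define c where "c = last e"
  have lw: "length w = n" and lu: "length u = n" unfolding w_def u_def using s(2) by simp_all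
  have "e \<noteq> []" "butlast e = w" using e(2,3) unfolding w_def by (auto simp: butlast_conv_take)
  then have ewc: "e = w @ [c]" unfolding c_def by (metis append_butlast_last_id)
  obtain r where r: "suffix u (s @ r)" "r @ p \<noteq> []" "cyc (p @ r) \<in> C"
    using s(1) unfolding closable_def u_def p_def by auto
  obtain r' where r': "suffix w (w @ [c] @ r')" "cyc ([c] @ r') \<in> C"
    using e(1) ewc lw unfolding closable_def by auto
  obtain S0 where S0: "s = S0 @ w" unfolding w_def by (metis append_take_drop_id)
  have "suffix (w @ r) (S0 @ w @ r)" by (rule suffix_appendI[OF suffix_order.refl])
  then have wr: "suffix u (w @ r)"
    using r(1) S0 lu lw suffix_length_suffix[of u "S0 @ w @ r" "w @ r"] by simp
  then obtain Y where "w @ r = Y @ u" by (auto simp: suffix_def)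
  then have "w @ r @ p = (Y @ S0) @ w" using S0 unfolding u_def p_def
    by (metis append.assoc append_take_drop_id)
  then have "suffix w (w @ r @ p)" by (simp add: suffix_def)
  moreover have "cyc (r @ p) \<in> C" using r(2,3) cyc_append_commute by metis
  moreover have "conductor C w" using cond lw by blast
  moreover have "[c] @ r' \<noteq> []" by simp
  ultimately have "cyc (([c] @ r') @ (r @ p)) \<in> C"
    using r'(1,2) r(2) unfolding conductor_def by blast
  moreover have "cyc (([c] @ r') @ (r @ p)) = cyc ((p @ [c]) @ r' @ r)"
    using cyc_append_commute[of "[c] @ r' @ r" p] by simp
  moreover obtain Z where Z: "w @ [c] @ r' = Z @ w" using r'(1) by (auto simp: suffix_def)
  then have "(s @ [c]) @ r' @ r = (S0 @ Z) @ w @ r"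
    using S0 arg_cong[OF Z, of "\<lambda>t. S0 @ t @ r"] by simp
  then have "suffix u ((s @ [c]) @ r' @ r)" using suffix_appendI[OF wr] by metis
  moreover have "take n (s @ [c]) = u" "drop n (s @ [c]) = p @ [c]"
    unfolding u_def p_def using s(2) by simp_all
  ultimately show ?thesis unfolding closable_def c_def[symmetric] by fastforce
qed

lemma closable_closed:
  assumes s: "closable C n s" "n < length s" "suffix (take n s) s"
    and cd: "conductor C (take n s)"
  shows "cyc (drop n s) \<in> C"
proof -
  define u where "u = take n s"
  obtain r where r: "suffix u (s @ r)" "drop n s @ r \<noteq> []" "cyc (drop n s @ r) \<in> C"
    using s(1) unfolding closable_def u_def by blast
  show ?thesis
  proof (cases "r = []")
    case False
    obtain S0 where S0: "s = S0 @ u" using s(3) unfolding u_def by (auto simp: suffix_def)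
    have "suffix (u @ r) (S0 @ u @ r)" by (rule suffix_appendI[OF suffix_order.refl])
    then have "suffix u (u @ r)"
      using r(1) S0 suffix_length_suffix[of u "S0 @ u @ r" "u @ r"] by simp
    moreover have "suffix u (u @ drop n s)" "drop n s \<noteq> []"
      using s(2,3) unfolding u_def by simp_all
    ultimately show ?thesis using cd r(3) False unfolding conductor_def u_def by blast
  qed (use r in simp)
qed

context
  fixes C :: "(int \<Rightarrow> 'a) set set" and G :: "('v, 'e, 'a) agraph" and n :: nat
  assumes C: "chromosome_set C" and D: "de_bruijn_graph G n"
begin

lemma de_bruijn_walk_closable:
  assumes EA: "elab G ` arcs G \<subseteq> factors C (Suc n)"
    and cond: "\<forall>w. length w = n \<longrightarrow> conductor C w"
  shows "is_walk G v es \<Longrightarrow> es \<noteq> [] \<Longrightarrow> closable C n (vlab G v @ walk_ext G es)"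
proof (induction es rule: rev_induct)
  case (snoc e es)
  have w: "is_walk G v es" and e: "e \<in> arcs G" "tail G e = walk_end G v es"
    using snoc.prems(1) by (auto simp: is_walk_append)
  have ge: "closable C n (elab G e)" using factor_closable[OF C] EA e(1) by blast
  have el: "elab G e = vlab G (tail G e) @ arc_ext G e"
    using elab_eq_tail_ext[OF de_bruijn_abstract[OF D] e(1)] .
  moreover have "length (arc_ext G e) = 1" using de_bruijn_ext_lead_length[OF D e(1)] by simp
  ultimately have ext: "arc_ext G e = [last (elab G e)]" by (cases "arc_ext G e") auto
  show ?case
  proof (cases "es = []")
    case True
    then show ?thesis using ge el e(2) by simp
  next
    case False
    define s where "s = vlab G v @ walk_ext G es"
    have ls: "length s = n + length es" using de_bruijn_walk_label_length[OF D w] unfolding s_def .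
    have "take n (elab G e) = vlab G (walk_end G v es)" using de_bruijn_arc(2)[OF D e(1)] e(2) by simp
    also have "\<dots> = take n (drop (length es) s)" using de_bruijn_vlab_at[OF D w, of "length es"]
      unfolding s_def by simp
    also have "\<dots> = drop (length s - n) s" using ls by (simp add: add.commute)
    finally have te: "take n (elab G e) = drop (length s - n) s" .
    have "closable C n s" using snoc.IH[OF w False] unfolding s_def .
    then have "closable C n (s @ [last (elab G e)])"
      using closable_snoc[OF cond _ _ ge de_bruijn_arc(1)[OF D e(1)] te] ls by simp
    then show ?thesis unfolding s_def using ext by simp
  qed
qed simp

lemma de_bruijn_CPC_subset:
  assumes EA: "elab G ` arcs G \<subseteq> factors C (Suc n)"
    and cond: "\<forall>w. length w = n \<longrightarrow> conductor C w"
  shows "CPC G \<subseteq> C"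
proof
  fix c assume "c \<in> CPC G"
  then obtain v es where W: "is_walk G v es" "es \<noteq> []" "walk_end G v es = v"
    and c: "c = cyc (walk_ext G es)"
    using CPC_iff_closed_walk[OF de_bruijn_abstract[OF D]] by blast
  define s where "s = vlab G v @ walk_ext G es"
  have lv: "length (vlab G v) = n"
    using de_bruijn_vlab_length[OF D is_walk_start_in_verts[OF W(1)]] .
  have "closable C n s" using de_bruijn_walk_closable[OF EA cond W(1,2)] unfolding s_def .
  moreover have "n < length s" using de_bruijn_walk_label_length[OF D W(1)] W(2) unfolding s_def by simp
  moreover have "take n s = vlab G v" using lv unfolding s_def by simp
  moreover have "suffix (vlab G v) s"
    using suffix_walk_end_label[OF de_bruijn_abstract[OF D] W(1)] W(3) unfolding s_def by simp
  ultimately have "cyc (drop n s) \<in> C" using closable_closed cond lv by metis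
  then show "c \<in> C" using lv unfolding c s_def by simp
qed

lemma de_bruijn_closed_walk_of_word:
  assumes EA: "factors C (Suc n) \<subseteq> elab G ` arcs G"
    and f: "c \<in> C" "f \<in> c" and v: "v \<in> verts G" "vlab G v = window f 0 n"
  shows "\<exists>es. is_walk G v es \<and> es \<noteq> [] \<and> walk_end G v es = v \<and> cyc (walk_ext G es) = c \<and>
           elab G (hd es) = window f 0 (Suc n)"
proof -
  obtain p where p: "p > 0" "periodic f p" "c = shifts f"
    using chromosome_set_periodic[OF C f] by blast
  define s where "s = window f 0 (n + p)"
  have ls: "length s = n + p" unfolding s_def by simp
  have W: "\<forall>j. j + Suc n \<le> length s \<longrightarrow> take (Suc n) (drop j s) \<in> elab G ` arcs G"
  proof (intro allI impI)
    fix j assume "j + Suc n \<le> length s"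
    then have "take (Suc n) (drop j s) = window f (int j) (Suc n)"
      unfolding s_def by (simp add: drop_window take_window)
    then show "take (Suc n) (drop j s) \<in> elab G ` arcs G"
      using window_in_factors[OF C f] EA by auto
  qed
  have "vlab G v = take n s" using v(2) unfolding s_def by (simp add: take_window)
  then obtain es where es: "is_walk G v es" "vlab G v @ walk_ext G es = s"
    using de_bruijn_walk_of_word[OF D v(1) _ _ W] ls by auto
  have les: "length es = p" using de_bruijn_walk_label_length[OF D es(1)] es(2) ls by simp
  then have ne: "es \<noteq> []" using p(1) by auto
  have "vlab G (walk_end G v es) = take n (drop p s)"
    using de_bruijn_vlab_at[OF D es(1), of p] es(2) les by simp
  also have "\<dots> = window f 0 n"
    unfolding s_def using window_periodic_shift[OF p(2), of 0 1 n] by (simp add: drop_window take_window)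
  finally have "walk_end G v es = v"
    using de_bruijn_vlab_inj[OF D walk_end_in_verts[OF es(1)] v(1)] v(2) by simp
  moreover have "walk_ext G es = window f (int n) p"
    using es(2) v(2) unfolding s_def by (metis append_eq_conv_conj drop_window add_diff_cancel_left'
        le_add1 length_window add_0)
  then have "cyc (walk_ext G es) = c" using cyc_window[OF p(2,1)] p(3) by simp
  moreover have "elab G (hd es) = window f 0 (Suc n)"
    using de_bruijn_elab_at[OF D es(1), of 0] es(2) ne p(1) unfolding s_def
    by (simp add: hd_conv_nth take_window)
  ultimately show ?thesis using es(1) ne by blast
qed

lemma subset_de_bruijn_CPC:
  assumes EA: "factors C (Suc n) \<subseteq> elab G ` arcs G" and VA: "factors C n \<subseteq> vlab G ` verts G"
  shows "C \<subseteq> CPC G"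
proof
  fix c assume c: "c \<in> C"
  then obtain x where "x \<noteq> []" "c = cyc x" using C unfolding chromosome_set_def is_cyclic_def by blast
  then have f: "bi_power x \<in> c" using self_in_shifts by (simp add: cyc_eq_shifts)
  have "window (bi_power x) 0 n \<in> vlab G ` verts G" using window_in_factors[OF C c f] VA by blast
  then obtain v where v: "v \<in> verts G" "vlab G v = window (bi_power x) 0 n" by auto
  show "c \<in> CPC G"
    using de_bruijn_closed_walk_of_word[OF EA c f v] CPC_iff_closed_walk[OF de_bruijn_abstract[OF D]]
    by metis
qed

lemma de_bruijn_assembly_graph:
  assumes EA: "elab G ` arcs G = factors C (Suc n)" and VA: "vlab G ` verts G = factors C n"
  shows "assembly_graph G"
proof -
  have arc_cycle: "\<exists>v es. directed_cycle G v es \<and> e \<in> set es" if e: "e \<in> arcs G" for e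
  proof -
    obtain f c where f: "elab G e = window f 0 (Suc n)" "c \<in> C" "f \<in> c"
      using EA e unfolding factors_def by blast
    have tv: "tail G e \<in> verts G" "vlab G (tail G e) = window f 0 n"
      using de_bruijn_arc(2,4)[OF D e] f(1) by (auto simp: take_window)
    obtain es where es: "is_walk G (tail G e) es" "es \<noteq> []" "walk_end G (tail G e) es = tail G e"
      "elab G (hd es) = window f 0 (Suc n)"
      using de_bruijn_closed_walk_of_word[OF _ f(2,3) tv] EA by blast
    have "hd es \<in> arcs G" using is_walk_arcs[OF es(1)] hd_in_set[OF es(2)] by blast
    then have "e \<in> set es" using de_bruijn_elab_inj[OF D _ e] es(4) f(1) hd_in_set[OF es(2)] by metis
    then show ?thesis using closed_walk_contains_cycle[OF es(1-3)] by blast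
  qed
  have "\<exists>v es. directed_cycle G v es \<and> u \<in> tail G ` set es" if u: "u \<in> verts G" for u
  proof -
    obtain f c where f: "vlab G u = window f 0 n" "c \<in> C" "f \<in> c"
      using VA u unfolding factors_def by blast
    obtain e where e: "e \<in> arcs G" "elab G e = window f 0 (Suc n)"
      using window_in_factors[OF C f(2,3), of 0 "Suc n"] EA by (metis imageE)
    have "tail G e \<in> verts G" "vlab G (tail G e) = vlab G u"
      using de_bruijn_arc(2,4)[OF D e(1)] e(2) f(1) by (auto simp: take_window)
    then have "tail G e = u" using de_bruijn_vlab_inj[OF D _ u] by blast
    then show ?thesis using arc_cycle[OF e(1)] by blast
  qed
  moreover have "\<not> prefix_edge G e" if "e \<in> arcs G" for e
  proof
    assume "prefix_edge G e"
    then have "length (elab G e) = length (drop 1 (elab G e))"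
      using de_bruijn_arc(3)[OF D that] unfolding prefix_edge_def by simp
    then show False using de_bruijn_arc(1)[OF D that] by simp
  qed
  ultimately show ?thesis
    unfolding assembly_graph_def using de_bruijn_abstract[OF D] arc_cycle by blast
qed

end

lemma de_bruijn_graph_exists:
  fixes C :: "(int \<Rightarrow> 'a::finite) set set"
  assumes C: "chromosome_set C"
  shows "\<exists>G :: (nat, nat, 'a) agraph. finite_graph G \<and> de_bruijn_graph G n \<and>
           elab G ` arcs G = factors C (Suc n) \<and> vlab G ` verts G = factors C n"
proof -
  define NV where "NV = card (factors C n)"
  define NE where "NE = card (factors C (Suc n))"
  obtain lv where lv: "bij_betw lv {0..<NV} (factors C n)"
    using ex_bij_betw_nat_finite[OF finite_factors] unfolding NV_def by blast
  obtain le where le: "bij_betw le {0..<NE} (factors C (Suc n))"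
    using ex_bij_betw_nat_finite[OF finite_factors] unfolding NE_def by blast
  define vertex_of where "vertex_of = the_inv_into {0..<NV} lv"
  define G :: "(nat, nat, 'a) agraph" where
    "G = \<lparr>verts = {0..<NV}, arcs = {0..<NE}, tail = (\<lambda>e. vertex_of (take n (le e))),
          head = (\<lambda>e. vertex_of (drop 1 (le e))), vlab = lv, elab = le\<rparr>"
  have vertex_of: "vertex_of w \<in> {0..<NV}" "lv (vertex_of w) = w" if "w \<in> factors C n" for w
    using that lv bij_betw_the_inv_into[OF lv] f_the_inv_into_f_bij_betw[OF lv]
    unfolding vertex_of_def by (auto simp: bij_betw_def)
  have arc: "vertex_of (take n (le e)) \<in> {0..<NV} \<and> vertex_of (drop 1 (le e)) \<in> {0..<NV} \<and>
      length (le e) = Suc n \<and> lv (vertex_of (take n (le e))) = take n (le e) \<and>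
      lv (vertex_of (drop 1 (le e))) = drop 1 (le e)" if "e \<in> {0..<NE}" for e
  proof -
    have w: "le e \<in> factors C (Suc n)" using bij_betwE[OF le] that by blast
    show ?thesis
      using vertex_of[OF take_factor[OF w]] vertex_of[OF drop_factor[OF C w]] length_factors[OF w]
      by simp
  qed
  have "length (lv v) = n" if "v \<in> {0..<NV}" for v
    using bij_betwE[OF lv] that length_factors by blast
  then have "de_bruijn_graph G n"
    unfolding de_bruijn_graph_def G_def
    using arc bij_betw_imp_inj_on[OF lv] bij_betw_imp_inj_on[OF le] by simp
  moreover have "finite_graph G" unfolding finite_graph_def G_def by simp
  moreover have "elab G ` arcs G = factors C (Suc n)" "vlab G ` verts G = factors C n"
    unfolding G_def using le lv by (simp_all add: bij_betw_def)
  ultimately show ?thesis by blast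
qed

theorem conducting_graph_exists:
  fixes C :: "(int \<Rightarrow> 'a::finite) set set"
  assumes C: "chromosome_set C" and "finitely_conducting C"
  shows "\<exists>G :: (nat, nat, 'a) agraph. finite_graph G \<and> assembly_graph G \<and> non_redundant G \<and> CPC G = C"
proof -
  obtain K where "\<forall>v. K \<le> length v \<longrightarrow> conductor C v"
    using assms(2) unfolding finitely_conducting_def by blast
  then have "\<forall>w. length w = K \<longrightarrow> conductor C w" by simp
  moreover obtain G :: "(nat, nat, 'a) agraph" where G: "finite_graph G" "de_bruijn_graph G K"
    "elab G ` arcs G = factors C (Suc K)" "vlab G ` verts G = factors C K"
    using de_bruijn_graph_exists[OF C] by blast
  ultimately have "CPC G = C"
    using de_bruijn_CPC_subset[OF C G(2)] subset_de_bruijn_CPC[OF C G(2)] by blast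
  then show ?thesis
    using G de_bruijn_assembly_graph[OF C G(2)] de_bruijn_non_redundant[OF G(2)] by blast
qed

theorem mainTheorem6:
  fixes C :: "(int \<Rightarrow> 'a::finite) set set"
  assumes "chromosome_set C"
  shows "(\<exists>G :: (nat, nat, 'a) agraph.
            finite_graph G \<and> assembly_graph G \<and> non_redundant G \<and> CPC G = C)
         \<longleftrightarrow> finitely_conducting C"
  using graph_finitely_conducting conducting_graph_exists[OF assms] by blast

end
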